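(* For every $n\ge 1$, the number of permutation tableaux $T$ of length $n$ with $\mathrm{inv}(T)=0$ equals the Bell number $B_n$, the number of set partitions of $[n]$.
   Context: Permutation tableaux. Draw a Ferrers diagram in English convention: rows are left-justified, row lengths weakly decrease from top to bottom, and every column is nonempty. Rows of length zero are allowed. A permutation tableau $T$ is a filling of the cells of such a diagram with 0's and 1's satisfying two conditions: (i) every column contains at least one 1; (ii) no cell containing 0 has both a 1 above it in its column and a 1 to its left in its row. Its length $n$ is the number of rows plus the number of columns. Labels. The southeast boundary path of $n$ unit south/west steps, from the top-right corner to the bottom-left corner, has its steps labeled $1,\ldots,n$ in order. Each row gets the label of its south step (at the right end of the row), and each column the label of its west step. $(i,j)$ denotes the cell in row $i$ and column $j$. Zeros, ones and rows. A 1 is topmost if there is no 1 above it in its column. A 0 is restricted if there is a 1 above it in its column. A rightmost restricted 0 is a restricted 0 with no restricted 0 to its right in its row. A row is unrestricted if it contains no restricted 0; empty rows are unrestricted. Dots. Black dots are placed on the topmost 1's (one per column), each labeled by its column label. White dots are placed on the rightmost restricted 0's (one per restricted row), each labeled by its row label. Alternating paths. An alternating path is a sequence of dots, identified with the sequence of their labels, built as follows. - From a white dot in cell $(i,j)$, the next dot is the black dot of column $j$. - From a black dot in cell $(i,j)$: if row $i$ is unrestricted, the path ends; otherwise the next dot is the white dot of row $i$. - If $k$ is a column label or the label of a restricted row, $P_k$ is the path starting at the dot labeled $k$. - If $r$ is the label of an unrestricted row, $P_r$ is the empty path. $P_k$ is contained in a path $P$ if $k$ labels a dot of $P$. Empty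 paths are contained in no path. Order on paths. Let $P_a,P_b$ be two paths, neither contained in the other. Remove their longest common final segment, obtaining $P'_a,P'_b$. The ending position of $P'_a$ is defined as follows: - if $P'_a$ is nonempty, it is the cell of its last dot; - if $P_a$ is the empty path of an unrestricted row $r$, it is a point at the right end of row $r$, strictly to the right of all its cells. $P_a>P_b$ if the ending position of $P'_a$ is in a strictly lower row than that of $P'_b$, or in the same row and strictly to the right. Otherwise $P_a<P_b$. Inversions. An inversion is a pair $(j,k)$ of labels satisfying all of the following: $j$ is a column label; $j<k$; $k$ is not the label of a dot of $P_j$; and $P_j>P_k$. $\mathrm{inv}(T)$ is the number of inversions. *)

theory Defs
  imports "HOL-Library.Disjoint_Sets"
begin

text \<open>A tableau of length n is a pair (S, F): S is the set of row labels
(labels of south steps of the boundary path, a subset of {1..n}); the column labels are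
{1..n} - S. Cell (i,j) (row label i, column label j) exists iff i < j (the south step i
comes before the west step j). F is the set of cells filled with 1. Row i' is above row i
iff i' < i; column j' is to the left of column j iff j' > j.\<close>

definition cols :: "nat \<Rightarrow> nat set \<Rightarrow> nat set" where
  "cols n S = {1..n} - S"

definition cells :: "nat \<Rightarrow> nat set \<Rightarrow> (nat \<times> nat) set" where
  "cells n S = {(i,j). i \<in> S \<and> j \<in> cols n S \<and> i < j}"

definition perm_tableau :: "nat \<Rightarrow> nat set \<times> (nat \<times> nat) set \<Rightarrow> bool" where
  "perm_tableau n T \<longleftrightarrow>
     (let S = fst T; F = snd T in
        S \<subseteq> {1..n}
      \<and> (\<forall>j\<in>cols n S. \<exists>i\<in>S. i < j)
      \<and> F \<subseteq> cells n S
      \<and> (\<forall>j\<in>cols n S. \<exists>i. (i,j) \<in> F)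
      \<and> (\<forall>i j. (i,j) \<in> cells n S \<and> (i,j) \<notin> F \<longrightarrow>
              \<not> ((\<exists>i'<i. (i',j) \<in> F) \<and> (\<exists>j'>j. (i,j') \<in> F))))"

definition top1 :: "(nat \<times> nat) set \<Rightarrow> nat \<Rightarrow> nat" where
  "top1 F j = Min {i. (i,j) \<in> F}"

definition restricted0 :: "nat \<Rightarrow> nat set \<Rightarrow> (nat \<times> nat) set \<Rightarrow> nat \<Rightarrow> nat \<Rightarrow> bool" where
  "restricted0 n S F i j \<longleftrightarrow> (i,j) \<in> cells n S \<and> (i,j) \<notin> F \<and> (\<exists>i'<i. (i',j) \<in> F)"

definition restricted_row :: "nat \<Rightarrow> nat set \<Rightarrow> (nat \<times> nat) set \<Rightarrow> nat \<Rightarrow> bool" where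
  "restricted_row n S F i \<longleftrightarrow> (\<exists>j. restricted0 n S F i j)"

text \<open>Column of the rightmost restricted 0 (the white dot) of row i.\<close>
definition wcol :: "nat \<Rightarrow> nat set \<Rightarrow> (nat \<times> nat) set \<Rightarrow> nat \<Rightarrow> nat" where
  "wcol n S F i = Min {j. restricted0 n S F i j}"

definition dotpos :: "nat \<Rightarrow> nat set \<Rightarrow> (nat \<times> nat) set \<Rightarrow> nat \<Rightarrow> nat \<times> nat" where
  "dotpos n S F k = (if k \<in> S then (k, wcol n S F k) else (top1 F k, k))"

text \<open>Alternating path, computed with a fuel argument (a path has at most n dots).\<close>
fun apath :: "nat \<Rightarrow> nat \<Rightarrow> nat set \<Rightarrow> (nat \<times> nat) set \<Rightarrow> nat \<Rightarrow> nat list" where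
  "apath 0 n S F k = []"
| "apath (Suc m) n S F k =
     (if k \<in> cols n S then
        k # (if restricted_row n S F (top1 F k) then apath m n S F (top1 F k) else [])
      else if k \<in> S \<and> restricted_row n S F k then k # apath m n S F (wcol n S F k)
      else [])"

definition altpath :: "nat \<Rightarrow> nat set \<Rightarrow> (nat \<times> nat) set \<Rightarrow> nat \<Rightarrow> nat list" where
  "altpath n S F k = apath n n S F k"

fun strip_common :: "nat list \<Rightarrow> nat list \<Rightarrow> nat list \<times> nat list" where
  "strip_common (x#xs) (y#ys) = (if x = y then strip_common xs ys else (x#xs, y#ys))"
| "strip_common xs ys = (xs, ys)"

text \<open>Ending position of P'_a (after removing the common final segment with P_b).
For the empty path of an unrestricted row a, the point right of all cells of row a is
encoded as (a, a): its horizontal coordinate a is smaller than every column label of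
that row, i.e. strictly to the right.\<close>
definition endpos :: "nat \<Rightarrow> nat set \<Rightarrow> (nat \<times> nat) set \<Rightarrow> nat \<Rightarrow> nat \<Rightarrow> nat \<times> nat" where
  "endpos n S F a b =
     (let ra = fst (strip_common (rev (altpath n S F a)) (rev (altpath n S F b)))
      in if ra = [] then (a, a) else dotpos n S F (hd ra))"

text \<open>P_a > P_b: strictly lower row (larger row label), or same row and strictly
to the right (smaller column coordinate).\<close>
definition path_gt :: "nat \<Rightarrow> nat set \<Rightarrow> (nat \<times> nat) set \<Rightarrow> nat \<Rightarrow> nat \<Rightarrow> bool" where
  "path_gt n S F a b \<longleftrightarrow>
     (let pa = endpos n S F a b; pb = endpos n S F b a
      in fst pb < fst pa \<or> (fst pa = fst pb \<and> snd pa < snd pb))"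

definition inversions :: "nat \<Rightarrow> nat set \<times> (nat \<times> nat) set \<Rightarrow> (nat \<times> nat) set" where
  "inversions n T = (let S = fst T; F = snd T in
     {(j,k). j \<in> cols n S \<and> j < k \<and> k \<le> n \<and> k \<notin> set (altpath n S F j) \<and> path_gt n S F j k})"

definition tab_inv :: "nat \<Rightarrow> nat set \<times> (nat \<times> nat) set \<Rightarrow> nat" where
  "tab_inv n T = card (inversions n T)"

end

theory Submission
  imports Defs
begin

text \<open>
  Let I(n) be the set of inversion-free permutation tableaux of length n, and call a
  row free if it is unrestricted and contains no black dot.  The last boundary step
  n+1 of a tableau of length n+1 is an empty bottom row or a leftmost column, and
  removing it leaves a tableau of length n.  After basic facts on dots and on the
  recursion of alternating paths, whose order is decided by the rows where they end,
  we show: adding a bottom row, or a leftmost column whose 1's form a nonempty set X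
  of free rows, does not change the inversions (old paths only acquire a tail that
  depends on their ending row), whereas a 1 of the new column in a non-free row
  creates an inversion.  Hence I(n+1) is the disjoint union of these children of the
  members of I(n).  Likewise a partition of {1..n+1} adds {n+1} as a singleton or
  joins n+1 to a nonempty set of singletons.  In both families a parent with a free
  rows (resp. singletons) has one child with a+1 and, for b < a, (a choose b) children
  with b of them.  A generic counting lemma then gives equal cardinalities.
\<close>

section \<open>Basic structure of permutation tableaux\<close>

lemma perm_tableauI:
  assumes "S \<subseteq> {1..n}" "\<And>j. j \<in> cols n S \<Longrightarrow> \<exists>i\<in>S. i < j" "F \<subseteq> cells n S"
    "\<And>j. j \<in> cols n S \<Longrightarrow> \<exists>i. (i,j) \<in> F"
    "\<And>i j i' j'. (i,j) \<in> cells n S \<Longrightarrow> (i,j) \<notin> F \<Longrightarrow> i' < i \<Longrightarrow> (i',j) \<in> F \<Longrightarrow> j < j' \<Longrightarrow>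
       (i,j') \<in> F \<Longrightarrow> False"
  shows "perm_tableau n (S,F)"
  using assms unfolding perm_tableau_def Let_def by (simp, blast)

locale perm_tab =
  fixes n :: nat and S :: "nat set" and F :: "(nat \<times> nat) set"
  assumes perm_tab: "perm_tableau n (S,F)"
begin

abbreviation "C \<equiv> cols n S"
abbreviation "rr \<equiv> restricted_row n S F"
abbreviation "r0 \<equiv> restricted0 n S F"
abbreviation "tp \<equiv> top1 F"
abbreviation "wc \<equiv> wcol n S F"
abbreviation "P \<equiv> altpath n S F"

lemma rows_sub: "S \<subseteq> {1..n}"
  using perm_tab by (simp add: perm_tableau_def Let_def)

lemma ones_sub_cells: "F \<subseteq> cells n S"
  using perm_tab by (simp add: perm_tableau_def Let_def)

lemma col_has_one: "j \<in> C \<Longrightarrow> \<exists>i. (i,j) \<in> F"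
  using perm_tab by (simp add: perm_tableau_def Let_def)

lemma col_has_row: "j \<in> C \<Longrightarrow> \<exists>i\<in>S. i < j"
  using perm_tab by (simp add: perm_tableau_def Let_def)

lemma no_one_left_of_restricted:
  "(i,j) \<in> cells n S \<Longrightarrow> (i,j) \<notin> F \<Longrightarrow> i' < i \<Longrightarrow> (i',j) \<in> F \<Longrightarrow> j < j' \<Longrightarrow> (i,j') \<notin> F"
  using perm_tab unfolding perm_tableau_def Let_def fst_conv snd_conv
  by (elim conjE) (erule allE[of _ i], erule allE[of _ j], blast)

lemma cols_iff: "j \<in> C \<longleftrightarrow> j \<in> {1..n} \<and> j \<notin> S"
  by (simp add: cols_def)

lemma col_not_row: "j \<in> C \<Longrightarrow> j \<notin> S"
  by (simp add: cols_def)

lemma col_le: "j \<in> C \<Longrightarrow> j \<le> n"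
  by (simp add: cols_def)

lemma cellsD: "(i,j) \<in> cells n S \<Longrightarrow> i \<in> S \<and> j \<in> C \<and> i < j"
  by (simp add: cells_def)

lemma onesD: "(i,j) \<in> F \<Longrightarrow> i \<in> S \<and> j \<in> C \<and> i < j"
  using ones_sub_cells cellsD by blast

lemma finite_cols: "finite C"
  by (simp add: cols_def)

lemma finite_rows: "finite S"
  using rows_sub finite_subset by blast

lemma card_cols_rows: "card C + card S = n"
proof -
  have "C \<union> S = {1..n}" "C \<inter> S = {}"
    using rows_sub by (auto simp: cols_def)
  then show ?thesis
    using card_Un_disjoint[OF finite_cols finite_rows] by simp
qed

lemma finite_col_ones: "finite {i. (i,j) \<in> F}"
proof -
  have "{i. (i,j) \<in> F} \<subseteq> {1..n}"
    using rows_sub by (auto dest!: onesD)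
  then show ?thesis by (rule finite_subset) simp
qed

lemma top_one: "j \<in> C \<Longrightarrow> (tp j, j) \<in> F"
proof -
  assume "j \<in> C"
  then have "{i. (i,j) \<in> F} \<noteq> {}" using col_has_one by blast
  from Min_in[OF finite_col_ones this] show ?thesis by (simp add: top1_def)
qed

lemma top_le: "(i,j) \<in> F \<Longrightarrow> tp j \<le> i"
  unfolding top1_def using Min_le[OF finite_col_ones] by blast

lemma top_row: "j \<in> C \<Longrightarrow> tp j \<in> S"
  using top_one onesD by blast

lemma top_lt: "j \<in> C \<Longrightarrow> tp j < j"
  using top_one onesD by blast

lemma restricted0D: "r0 i j \<Longrightarrow> i \<in> S \<and> j \<in> C \<and> i < j \<and> (i,j) \<notin> F \<and> tp j < i"
  unfolding restricted0_def using cellsD top_le by fastforce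

lemma restricted0_right_of_ones: "r0 i j \<Longrightarrow> (i,j') \<in> F \<Longrightarrow> j' < j"
proof -
  assume r: "r0 i j" and f: "(i,j') \<in> F"
  then obtain i' where "i' < i" "(i',j) \<in> F" by (auto simp: restricted0_def)
  moreover have "(i,j) \<in> cells n S" "(i,j) \<notin> F" using r by (auto simp: restricted0_def)
  ultimately have "\<not> j < j'" using no_one_left_of_restricted f by blast
  moreover have "j \<noteq> j'" using r f by (auto simp: restricted0_def)
  ultimately show ?thesis by simp
qed

lemma unrestricted_if_one_rightmost: "(i,j') \<in> F \<Longrightarrow> (\<And>j. r0 i j \<Longrightarrow> j \<le> j') \<Longrightarrow> \<not> rr i"
  using restricted0_right_of_ones by (fastforce simp: restricted_row_def)

lemma finite_restricted0: "finite {j. r0 i j}"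
proof -
  have "{j. r0 i j} \<subseteq> {1..n}" by (auto dest!: restricted0D simp: cols_iff)
  then show ?thesis by (rule finite_subset) simp
qed

lemma white_restricted0: "rr i \<Longrightarrow> r0 i (wc i)"
  unfolding restricted_row_def wcol_def using Min_in[OF finite_restricted0] by blast

lemma white_le: "r0 i j \<Longrightarrow> wc i \<le> j"
  unfolding wcol_def using Min_le[OF finite_restricted0] by blast

lemma restricted_row_in_rows: "rr i \<Longrightarrow> i \<in> S"
  using white_restricted0 restricted0D by blast

lemma white_col: "rr i \<Longrightarrow> wc i \<in> C"
  using white_restricted0 restricted0D by blast

lemma top_white_above: "rr i \<Longrightarrow> tp (wc i) < i"
  using white_restricted0 restricted0D by blast

lemma dotpos_col: "x \<in> C \<Longrightarrow> dotpos n S F x = (tp x, x)"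
  by (simp add: dotpos_def col_not_row)

lemma dotpos_row: "x \<in> S \<Longrightarrow> dotpos n S F x = (x, wc x)"
  by (simp add: dotpos_def)

text \<open>Alternating paths are computed with fuel \<open>n\<close>.  To see that this fuel suffices we
  use a potential on columns: the number of columns weakly left of \<open>j\<close> plus the
  number of rows strictly above the black dot of \<open>j\<close>.  It is at most \<open>n\<close> and drops by
  at least 2 from a column to the next column of its path.\<close>

definition potential :: "nat \<Rightarrow> nat" where
  "potential j = card {c\<in>C. j \<le> c} + card {r\<in>S. r < tp j}"

lemma potential_pos: "j \<in> C \<Longrightarrow> 1 \<le> potential j"
proof -
  assume "j \<in> C"
  then have "card {c\<in>C. j \<le> c} > 0" using finite_cols by (auto simp: card_gt_0_iff)
  then show ?thesis by (simp add: potential_def)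
qed

lemma potential_le: "potential j \<le> n"
proof -
  have "card {c\<in>C. j \<le> c} \<le> card C" "card {r\<in>S. r < tp j} \<le> card S"
    using finite_cols finite_rows by (auto intro: card_mono)
  then show ?thesis using card_cols_rows by (simp add: potential_def)
qed

lemma potential_step: "j \<in> C \<Longrightarrow> rr (tp j) \<Longrightarrow> potential (wc (tp j)) + 2 \<le> potential j"
proof -
  assume j: "j \<in> C" and r: "rr (tp j)"
  define w where "w = wc (tp j)"
  have jw: "j < w" unfolding w_def
    using restricted0_right_of_ones[OF white_restricted0[OF r] top_one[OF j]] .
  have tw: "tp w < tp j" unfolding w_def using top_white_above[OF r] .
  have "card (insert j {c\<in>C. w \<le> c}) \<le> card {c\<in>C. j \<le> c}"
    using j jw finite_cols by (intro card_mono) auto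
  then have cols: "Suc (card {c\<in>C. w \<le> c}) \<le> card {c\<in>C. j \<le> c}"
    using jw finite_cols by simp
  have "card (insert (tp w) {r\<in>S. r < tp w}) \<le> card {r\<in>S. r < tp j}"
    using tw top_row[OF white_col[OF r]] finite_rows by (intro card_mono) (auto simp: w_def)
  then have rows: "Suc (card {r\<in>S. r < tp w}) \<le> card {r\<in>S. r < tp j}"
    using finite_rows by simp
  show ?thesis using cols rows unfolding potential_def w_def by simp
qed

lemma potential_white: "rr i \<Longrightarrow> potential (wc i) + 2 \<le> n"
proof -
  assume r: "rr i"
  define w where "w = wc i"
  have tw: "tp w < i" unfolding w_def using top_white_above[OF r] .
  have "card {c\<in>C. w \<le> c} \<le> card C" using finite_cols by (intro card_mono) auto
  moreover
  have sub: "insert i (insert (tp w) {r\<in>S. r < tp w}) \<subseteq> S"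
    using top_row[OF white_col[OF r]] restricted_row_in_rows[OF r] by (auto simp: w_def)
  have "card (insert i (insert (tp w) {r\<in>S. r < tp w})) = Suc (Suc (card {r\<in>S. r < tp w}))"
    using finite_rows tw by (subst card_insert_disjoint; auto)+
  then have "Suc (Suc (card {r\<in>S. r < tp w})) \<le> card S"
    using card_mono[OF finite_rows sub] by simp
  ultimately show ?thesis using card_cols_rows unfolding potential_def w_def by simp
qed

definition fuel :: "nat \<Rightarrow> nat" where
  "fuel k = (if k \<in> C then potential k else if rr k then Suc (potential (wc k)) else 0)"

lemma fuel_le: "fuel k \<le> n"
  unfolding fuel_def using potential_le[of k] potential_white[of k] by auto

lemma apath_enough_fuel: "fuel k \<le> m \<Longrightarrow> apath (Suc m) n S F k = apath m n S F k"
proof (induction m arbitrary: k)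
  case 0
  then have "k \<notin> C" "\<not> rr k"
    using potential_pos by (fastforce simp: fuel_def split: if_splits)+
  then show ?case by simp
next
  case (Suc m)
  show ?case
  proof (cases "k \<in> C")
    case k: True
    show ?thesis
    proof (cases "rr (tp k)")
      case True
      have "tp k \<notin> C" using top_row[OF k] col_not_row by blast
      then have "fuel (tp k) \<le> m"
        using Suc.prems k True potential_step[OF k True] by (simp add: fuel_def)
      then show ?thesis using Suc.IH k True by simp
    qed (use k in simp)
  next
    case k: False
    show ?thesis
    proof (cases "k \<in> S \<and> rr k")
      case True
      then have "fuel (wc k) \<le> m" using Suc.prems k white_col[of k] by (auto simp: fuel_def)
      then show ?thesis using Suc.IH k True by simp
    next
      case False
      then have "apath (Suc m') n S F k = []" for m' using k by simp
      then show ?thesis by metis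
    qed
  qed
qed

lemma apath_fuel_mono:
  assumes "fuel k \<le> m" and "m \<le> m'"
  shows "apath m' n S F k = apath m n S F k"
  using assms(2)
proof (induction m' rule: dec_induct)
  case (step m')
  then show ?case using apath_enough_fuel[of k m'] assms(1) by simp
qed simp

lemma path_col: "j \<in> C \<Longrightarrow> P j = j # (if rr (tp j) then P (tp j) else [])"
proof -
  assume j: "j \<in> C"
  then obtain n' where n': "n = Suc n'" using cols_iff by (cases n) auto
  have "P j = j # (if rr (tp j) then apath n' n S F (tp j) else [])"
    using j by (simp add: altpath_def n')
  also have "\<dots> = j # (if rr (tp j) then P (tp j) else [])"
  proof (cases "rr (tp j)")
    case True
    have "tp j \<notin> C" using top_row[OF j] col_not_row by blast
    then have "fuel (tp j) = Suc (potential (wc (tp j)))" using True by (simp add: fuel_def)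
    then have "fuel (tp j) \<le> n'"
      using potential_step[OF j True] potential_le[of j] n' by linarith
    then show ?thesis using apath_fuel_mono[of "tp j" n' n] n' by (simp add: altpath_def)
  qed simp
  finally show ?thesis .
qed

lemma path_row: "k \<notin> C \<Longrightarrow> P k = (if rr k then k # P (wc k) else [])"
proof (cases "rr k")
  case True
  assume k: "k \<notin> C"
  obtain n' where n': "n = Suc n'" using potential_white[OF True] by (cases n) auto
  have "fuel (wc k) = potential (wc k)" using white_col[OF True] by (simp add: fuel_def)
  then have "fuel (wc k) \<le> n'" using potential_white[OF True] n' by linarith
  then have "apath n' n S F (wc k) = P (wc k)"
    using apath_fuel_mono[of "wc k" n' n] n' by (simp add: altpath_def)
  then show ?thesis using k True restricted_row_in_rows[OF True] by (simp add: altpath_def n')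
next
  case False
  assume k: "k \<notin> C"
  then show ?thesis using False by (cases n) (simp_all add: altpath_def)
qed

definition path_measure :: "nat \<Rightarrow> nat" where
  "path_measure k = (if k \<in> C then 2 * tp k + 2 else 2 * k + 1)"

lemma path_measure_col: "j \<in> C \<Longrightarrow> path_measure (tp j) < path_measure j"
  using top_row col_not_row by (auto simp: path_measure_def)

lemma path_measure_row: "rr k \<Longrightarrow> path_measure (wc k) < path_measure k"
  using white_col top_white_above restricted_row_in_rows col_not_row
  by (fastforce simp: path_measure_def)

lemma path_induct: "(\<And>k. (\<And>k'. path_measure k' < path_measure k \<Longrightarrow> Q k') \<Longrightarrow> Q k) \<Longrightarrow> Q k"
  by (rule measure_induct_rule[of path_measure]) blast

lemma path_col_nonempty: "j \<in> C \<Longrightarrow> P j \<noteq> []"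
  using path_col by simp

lemma path_last: "P k \<noteq> [] \<Longrightarrow> last (P k) \<in> C \<and> \<not> rr (tp (last (P k)))"
proof (induction k rule: path_induct)
  case (1 k)
  show ?case
  proof (cases "k \<in> C")
    case k: True
    show ?thesis
    proof (cases "rr (tp k)")
      case r: True
      have "tp k \<notin> C" using top_row[OF k] col_not_row by blast
      then have "P (tp k) \<noteq> []" using path_row r by simp
      then show ?thesis using 1(1)[OF path_measure_col[OF k]] path_col[OF k] r by simp
    qed (use k path_col in simp)
  next
    case k: False
    then have r: "rr k" using 1(2) path_row[OF k] by (cases "rr k") auto
    have "P (wc k) \<noteq> []" using path_col_nonempty white_col[OF r] by blast
    then show ?thesis using 1(1)[OF path_measure_row[OF r]] path_row[OF k] r by simp
  qed
qed

lemma path_labels: "x \<in> set (P k) \<Longrightarrow> x \<in> C \<or> rr x"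
proof (induction k rule: path_induct)
  case (1 k)
  show ?case
  proof (cases "k \<in> C")
    case True
    then show ?thesis using 1 path_col[OF True] path_measure_col[OF True] by (auto split: if_splits)
  next
    case False
    then show ?thesis using 1 path_row[OF False] path_measure_row by (auto split: if_splits)
  qed
qed

lemma path_labels_le: "x \<in> set (P k) \<Longrightarrow> x \<le> n"
  using path_labels restricted_row_in_rows rows_sub cols_iff by fastforce

text \<open>The row in which a path ends; for an empty path (an unrestricted row \<open>k\<close>) it is
  \<open>k\<close> itself.  Ending rows decide the comparison of paths.\<close>
definition end_row :: "nat \<Rightarrow> nat" where
  "end_row k = (if P k = [] then k else tp (last (P k)))"

lemma end_row_le: "P k \<noteq> [] \<Longrightarrow> end_row k \<le> (if k \<in> C then tp k else k)"
proof (induction k rule: path_induct)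
  case (1 k)
  show ?case
  proof (cases "k \<in> C")
    case k: True
    show ?thesis
    proof (cases "rr (tp k)")
      case r: True
      have tk: "tp k \<notin> C" using top_row[OF k] col_not_row by blast
      then have ne: "P (tp k) \<noteq> []" using path_row r by simp
      then have "end_row (tp k) \<le> tp k" using 1(1)[OF path_measure_col[OF k]] tk by simp
      then show ?thesis using path_col[OF k] r k ne by (simp add: end_row_def)
    qed (use k path_col in \<open>simp add: end_row_def\<close>)
  next
    case k: False
    then have r: "rr k" using 1(2) path_row[OF k] by (cases "rr k") auto
    have w: "wc k \<in> C" using white_col[OF r] .
    then have ne: "P (wc k) \<noteq> []" using path_col_nonempty by blast
    then have "end_row (wc k) \<le> tp (wc k)" using 1(1)[OF path_measure_row[OF r]] w by simp
    then show ?thesis using path_row[OF k] r top_white_above[OF r] ne k by (simp add: end_row_def)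
  qed
qed

lemma end_row_col: "j \<in> C \<Longrightarrow> end_row j < j"
  using end_row_le[OF path_col_nonempty] top_lt by fastforce

lemma end_row_nonempty:
  "P k \<noteq> [] \<Longrightarrow> last (P k) \<in> C \<and> end_row k = tp (last (P k)) \<and> end_row k \<in> S"
  using path_last[of k] top_row by (auto simp: end_row_def)

lemma end_row_unrestricted: "end_row k \<in> S \<Longrightarrow> \<not> rr (end_row k)"
proof (cases "P k = []")
  case True
  assume "end_row k \<in> S"
  then have "k \<notin> C" using True path_col_nonempty col_not_row by (auto simp: end_row_def)
  then show ?thesis using True path_row[of k] by (auto simp: end_row_def split: if_splits)
next
  case False
  then show ?thesis using path_last by (simp add: end_row_def)
qed


lemma path_col_step: "j \<in> C \<Longrightarrow> P j = j # P (tp j)"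
proof -
  assume j: "j \<in> C"
  then have "tp j \<notin> C" using top_row col_not_row by blast
  then show ?thesis using path_col[OF j] path_row[of "tp j"] by simp
qed

lemma end_row_col_step: "j \<in> C \<Longrightarrow> end_row j = end_row (tp j)"
  using path_col_step by (simp add: end_row_def)

lemma end_row_row_step: "k \<notin> C \<Longrightarrow> rr k \<Longrightarrow> end_row k = end_row (wc k)"
  using path_row path_col_nonempty[OF white_col] by (simp add: end_row_def)

end

section \<open>Comparing paths\<close>

text \<open>The order on paths only depends on the two label lists and on the placement
  \<open>D\<close> of the dots, so we study it for arbitrary lists.\<close>

definition ending_pos :: "(nat \<Rightarrow> nat \<times> nat) \<Rightarrow> nat \<Rightarrow> nat list \<Rightarrow> nat list \<Rightarrow> nat \<times> nat" where
  "ending_pos D a pa pb =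
     (let ra = fst (strip_common (rev pa) (rev pb)) in if ra = [] then (a,a) else D (hd ra))"

definition ends_gt :: "(nat \<Rightarrow> nat \<times> nat) \<Rightarrow> nat \<Rightarrow> nat \<Rightarrow> nat list \<Rightarrow> nat list \<Rightarrow> bool" where
  "ends_gt D a b pa pb =
     (let x = ending_pos D a pa pb; y = ending_pos D b pb pa
      in fst y < fst x \<or> (fst x = fst y \<and> snd x < snd y))"

lemma path_gt_ends_gt:
  "path_gt n S F a b = ends_gt (dotpos n S F) a b (altpath n S F a) (altpath n S F b)"
  by (simp add: path_gt_def ends_gt_def ending_pos_def endpos_def)

lemma strip_common_append: "strip_common (us @ xs) (us @ ys) = strip_common xs ys"
  by (induction us) auto

lemma strip_common_subset: "set (fst (strip_common xs ys)) \<subseteq> set xs"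
  by (induction xs ys rule: strip_common.induct) auto

lemma ends_gt_append: "ends_gt D a b (pa @ zs) (pb @ zs) = ends_gt D a b pa pb"
  by (simp add: ends_gt_def ending_pos_def strip_common_append)

lemma ending_pos_cong:
  assumes "\<And>x. x \<in> set pa \<Longrightarrow> D1 x = D2 x"
  shows "ending_pos D1 a pa pb = ending_pos D2 a pa pb"
proof -
  let ?ra = "fst (strip_common (rev pa) (rev pb))"
  show ?thesis
  proof (cases "?ra = []")
    case False
    then have "hd ?ra \<in> set pa" using strip_common_subset[of "rev pa" "rev pb"] hd_in_set by fastforce
    then show ?thesis using assms by (simp add: ending_pos_def Let_def)
  qed (simp add: ending_pos_def Let_def)
qed

lemma ends_gt_cong:
  "(\<And>x. x \<in> set pa \<union> set pb \<Longrightarrow> D1 x = D2 x) \<Longrightarrow> ends_gt D1 a b pa pb = ends_gt D2 a b pa pb"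
  unfolding ends_gt_def using ending_pos_cong[of pa D1 D2] ending_pos_cong[of pb D1 D2] by (metis Un_iff)

lemma rev_Cons_last: "rev p = x # y \<Longrightarrow> last p = x"
  by (metis hd_rev list.sel(1))

lemma ends_gt_last_differ:
  assumes "pa \<noteq> []" "pb \<noteq> []" "last pa \<noteq> last pb"
  shows "ends_gt D a b pa pb \<longleftrightarrow> fst (D (last pb)) < fst (D (last pa)) \<or>
     (fst (D (last pa)) = fst (D (last pb)) \<and> snd (D (last pa)) < snd (D (last pb)))"
proof -
  obtain xa ya where a: "rev pa = xa # ya" using assms(1) by (cases "rev pa") auto
  obtain xb yb where b: "rev pb = xb # yb" using assms(2) by (cases "rev pb") auto
  show ?thesis using assms(3) a b rev_Cons_last[OF a] rev_Cons_last[OF b]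
    by (simp add: ends_gt_def ending_pos_def Let_def)
qed

lemma ends_gt_Nil_right:
  assumes "pa \<noteq> []"
  shows "ends_gt D a b pa [] \<longleftrightarrow> b < fst (D (last pa)) \<or> (fst (D (last pa)) = b \<and> snd (D (last pa)) < b)"
proof -
  obtain xa ya where a: "rev pa = xa # ya" using assms by (cases "rev pa") auto
  show ?thesis using a rev_Cons_last[OF a] by (simp add: ends_gt_def ending_pos_def Let_def)
qed

context perm_tab
begin

lemma path_gt_end_rows:
  assumes j: "j \<in> C" and jk: "j < k" and diff: "end_row j \<noteq> end_row k"
  shows "ends_gt (dotpos n S F) j k (P j) (P k) \<longleftrightarrow> end_row k < end_row j"
proof -
  have pj: "P j \<noteq> []" using path_col_nonempty[OF j] .
  have lj: "last (P j) \<in> C" "end_row j = tp (last (P j))"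
    using end_row_nonempty[OF pj] by auto
  have Dj: "dotpos n S F (last (P j)) = (end_row j, last (P j))"
    using dotpos_col[OF lj(1)] lj(2) by simp
  show ?thesis
  proof (cases "P k = []")
    case True
    then have "end_row k = k" by (simp add: end_row_def)
    then show ?thesis
      using ends_gt_Nil_right[OF pj] True Dj end_row_col[OF j] jk by simp
  next
    case pk: False
    have lk: "last (P k) \<in> C" "end_row k = tp (last (P k))"
      using end_row_nonempty[OF pk] by auto
    then have "last (P j) \<noteq> last (P k)" using lj diff by auto
    then show ?thesis
      using ends_gt_last_differ[OF pj pk] Dj dotpos_col[OF lk(1)] lk(2) diff by auto
  qed
qed

end


section \<open>Free rows and the two ways of growing a tableau\<close>

text \<open>A row is free if it is unrestricted and contains no black dot.  New leftmost
  columns may only put their 1's in free rows.\<close>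

definition free_rows :: "nat \<Rightarrow> nat set \<times> (nat \<times> nat) set \<Rightarrow> nat set" where
  "free_rows n T = {r \<in> fst T. \<not> restricted_row n (fst T) (snd T) r \<and>
                               (\<forall>c\<in>cols n (fst T). top1 (snd T) c \<noteq> r)}"

lemma free_rows_sub: "perm_tableau n T \<Longrightarrow> free_rows n T \<subseteq> {1..n}"
  unfolding free_rows_def perm_tableau_def Let_def by auto

lemma finite_inversions: "finite (inversions n T)"
proof -
  have "inversions n T \<subseteq> {0..n} \<times> {0..n}" by (auto simp: inversions_def Let_def)
  then show ?thesis by (rule finite_subset) simp
qed

lemma tab_inv_0_iff: "tab_inv n T = 0 \<longleftrightarrow> inversions n T = {}"
  using finite_inversions by (simp add: tab_inv_def)

text \<open>Label \<open>n+1\<close> as a new row: it is empty, so cells, restricted 0's, dots and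
  paths are unchanged, and the new row is free.\<close>

context perm_tab
begin

lemma add_row_cols: "cols (Suc n) (insert (Suc n) S) = C"
  unfolding cols_def by (rule set_eqI) (simp, arith)

lemma add_row_cells: "cells (Suc n) (insert (Suc n) S) = cells n S"
  unfolding cells_def add_row_cols by (rule set_eqI) (auto simp: cols_def)

lemma add_row_restricted0: "restricted0 (Suc n) (insert (Suc n) S) F = r0"
  by (intro ext) (simp add: restricted0_def add_row_cells)

lemma add_row_restricted_row: "restricted_row (Suc n) (insert (Suc n) S) F = rr"
  by (intro ext) (simp add: restricted_row_def add_row_restricted0)

lemma add_row_wcol: "wcol (Suc n) (insert (Suc n) S) F = wc"
  by (intro ext) (simp add: wcol_def add_row_restricted0)

lemma add_row_perm_tableau: "perm_tableau (Suc n) (insert (Suc n) S, F)"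
  using perm_tab rows_sub unfolding perm_tableau_def Let_def fst_conv snd_conv add_row_cols add_row_cells
  by auto

lemma add_row_apath: "apath m (Suc n) (insert (Suc n) S) F k = apath m n S F k"
proof (induction m arbitrary: k)
  case (Suc m)
  have "(k \<in> insert (Suc n) S \<and> rr k) = (k \<in> S \<and> rr k)" using restricted_row_in_rows by blast
  then show ?case using Suc by (simp add: add_row_cols add_row_restricted_row add_row_wcol)
qed simp

lemma add_row_path: "altpath (Suc n) (insert (Suc n) S) F k = P k"
  using add_row_apath apath_fuel_mono[OF fuel_le, of "Suc n"] by (simp add: altpath_def)

lemma add_row_dotpos: "x \<noteq> Suc n \<Longrightarrow> dotpos (Suc n) (insert (Suc n) S) F x = dotpos n S F x"
  by (simp add: dotpos_def add_row_wcol)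

text \<open>The only new candidate pairs \<open>(j, n+1)\<close> are no inversions: the empty path of
  the bottom row is larger than every other path.\<close>
lemma add_row_no_new_inversion:
  assumes j: "j \<in> C"
  shows "\<not> ends_gt (dotpos (Suc n) (insert (Suc n) S) F) j (Suc n) (P j) (P (Suc n))"
proof -
  have ne: "P j \<noteq> []" using path_col_nonempty[OF j] .
  have lj: "last (P j) \<in> C" using path_last[OF ne] by blast
  have "Suc n \<notin> C" "\<not> rr (Suc n)" using restricted_row_in_rows rows_sub by (fastforce simp: cols_def)+
  then have "P (Suc n) = []" using path_row by simp
  moreover have "tp (last (P j)) < Suc n" "last (P j) \<noteq> Suc n" using top_lt[OF lj] col_le[OF lj] by auto
  ultimately show ?thesis
    using ends_gt_Nil_right[OF ne] add_row_dotpos dotpos_col[OF lj] by simp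
qed

lemma add_row_inversions: "inversions (Suc n) (insert (Suc n) S, F) = inversions n (S, F)"
proof -
  let ?D' = "dotpos (Suc n) (insert (Suc n) S) F"
  have "(j,k) \<in> inversions (Suc n) (insert (Suc n) S, F) \<longleftrightarrow> (j,k) \<in> inversions n (S, F)" for j k
  proof -
    have L: "(j,k) \<in> inversions (Suc n) (insert (Suc n) S, F) \<longleftrightarrow>
        j \<in> C \<and> j < k \<and> k \<le> Suc n \<and> k \<notin> set (P j) \<and> ends_gt ?D' j k (P j) (P k)"
      by (simp add: inversions_def add_row_cols add_row_path path_gt_ends_gt)
    have R: "(j,k) \<in> inversions n (S, F) \<longleftrightarrow>
        j \<in> C \<and> j < k \<and> k \<le> n \<and> k \<notin> set (P j) \<and> ends_gt (dotpos n S F) j k (P j) (P k)"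
      by (simp add: inversions_def path_gt_ends_gt)
    have "ends_gt ?D' j k (P j) (P k) = ends_gt (dotpos n S F) j k (P j) (P k)"
      using path_labels_le add_row_dotpos by (intro ends_gt_cong) fastforce
    then show ?thesis
      using L R add_row_no_new_inversion[of j] by (cases "k = Suc n") auto
  qed
  then show ?thesis by auto
qed

lemma add_row_free_rows: "free_rows (Suc n) (insert (Suc n) S, F) = insert (Suc n) (free_rows n (S, F))"
proof -
  have "\<not> rr (Suc n)" using restricted_row_in_rows rows_sub by fastforce
  moreover have "\<forall>c\<in>C. tp c \<noteq> Suc n" using top_lt by (fastforce simp: cols_def)
  ultimately show ?thesis by (auto simp: free_rows_def add_row_cols add_row_restricted_row)
qed

end


locale add_column = perm_tab n S F for n S F +
  fixes X :: "nat set"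
  assumes X_free: "X \<subseteq> free_rows n (S,F)" and X_nonempty: "X \<noteq> {}"
begin

definition "Fc = F \<union> (\<lambda>i. (i, Suc n)) ` X"
definition "m = Min X"

lemma X_rows: "X \<subseteq> S"
  using X_free by (auto simp: free_rows_def)

lemma finite_X: "finite X"
  using X_rows finite_rows finite_subset by blast

lemma m_in_X: "m \<in> X"
  using Min_in[OF finite_X X_nonempty] by (simp add: m_def)

lemma m_le: "x \<in> X \<Longrightarrow> m \<le> x"
  using Min_le[OF finite_X] by (simp add: m_def)

lemma X_unrestricted: "x \<in> X \<Longrightarrow> \<not> rr x"
  using X_free by (auto simp: free_rows_def)

lemma X_no_black_dot: "x \<in> X \<Longrightarrow> c \<in> C \<Longrightarrow> tp c \<noteq> x"
  using X_free by (auto simp: free_rows_def)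

lemma row_less: "i \<in> S \<Longrightarrow> i < Suc n"
  using rows_sub by (auto simp: less_Suc_eq_le)

lemma new_not_row: "Suc n \<notin> S"
  using row_less by blast

lemma col_ne_new: "j \<in> C \<Longrightarrow> j \<noteq> Suc n"
  using col_le by fastforce

lemma new_cols: "cols (Suc n) S = insert (Suc n) C"
  using new_not_row by (auto simp: cols_def)

lemma new_cells: "cells (Suc n) S = cells n S \<union> {(i, Suc n) | i. i \<in> S}"
  using new_cols row_less by (auto simp: cells_def cols_def)

lemma Fc_iff: "(i,j) \<in> Fc \<longleftrightarrow> (i,j) \<in> F \<or> (j = Suc n \<and> i \<in> X)"
  by (auto simp: Fc_def)

lemma Fc_old: "j \<noteq> Suc n \<Longrightarrow> (i,j) \<in> Fc \<longleftrightarrow> (i,j) \<in> F"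
  using Fc_iff by auto

lemma Fc_new: "(i, Suc n) \<in> Fc \<longleftrightarrow> i \<in> X"
  using Fc_iff onesD col_le by fastforce

text \<open>The new column respects condition (ii) because free rows are unrestricted.\<close>
lemma new_perm_tableau: "perm_tableau (Suc n) (S, Fc)"
proof (rule perm_tableauI)
  show "S \<subseteq> {1..Suc n}" using rows_sub by auto
  show "\<exists>i\<in>S. i < j" if "j \<in> cols (Suc n) S" for j
  proof (cases "j = Suc n")
    case True then show ?thesis using m_in_X X_rows row_less by blast
  next
    case False then show ?thesis using that new_cols col_has_row by auto
  qed
  show "Fc \<subseteq> cells (Suc n) S" using ones_sub_cells X_rows row_less by (auto simp: Fc_def new_cells)
  show "\<exists>i. (i,j) \<in> Fc" if "j \<in> cols (Suc n) S" for j
  proof (cases "j = Suc n")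
    case True then show ?thesis using m_in_X Fc_new by blast
  next
    case False then show ?thesis using that new_cols col_has_one Fc_iff by auto
  qed
  show False if a: "(i,j) \<in> cells (Suc n) S" "(i,j) \<notin> Fc" "i' < i" "(i',j) \<in> Fc" "j < j'" "(i,j') \<in> Fc"
    for i j i' j'
  proof -
    have "j \<noteq> Suc n" using a(5,6) Fc_iff onesD col_le by fastforce
    then have c: "(i,j) \<in> cells n S" "(i,j) \<notin> F" "(i',j) \<in> F" using a new_cells Fc_old by auto
    show False
    proof (cases "j' = Suc n")
      case True
      then have "i \<in> X" using a(6) Fc_new by simp
      moreover have "r0 i j" using c a(3) by (auto simp: restricted0_def)
      ultimately show False using X_unrestricted by (auto simp: restricted_row_def)
    next
      case False
      then show False using no_one_left_of_restricted[OF c(1,2) a(3) c(3) a(5)] a(6) Fc_old by auto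
    qed
  qed
qed

sublocale T: perm_tab "Suc n" S Fc
  using new_perm_tableau by unfold_locales

lemma new_top_old: "j \<noteq> Suc n \<Longrightarrow> top1 Fc j = tp j"
  unfolding top1_def using Fc_old by simp

lemma new_top_new: "top1 Fc (Suc n) = m"
proof -
  have "{i. (i, Suc n) \<in> Fc} = X" using Fc_new by auto
  then show ?thesis by (simp add: top1_def m_def)
qed

lemma new_restricted0:
  "restricted0 (Suc n) S Fc i j \<longleftrightarrow> (j \<noteq> Suc n \<and> r0 i j) \<or> (j = Suc n \<and> i \<in> S \<and> i \<notin> X \<and> m < i)"
proof (cases "j = Suc n")
  case True
  have "(\<exists>i'<i. i' \<in> X) \<longleftrightarrow> m < i" using m_in_X m_le by (meson le_less_trans)
  then show ?thesis using True row_less by (auto simp: restricted0_def new_cells Fc_new cells_def new_cols)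
next
  case False
  then show ?thesis using Fc_old by (auto simp: restricted0_def new_cells)
qed

lemma new_restricted_row:
  "restricted_row (Suc n) S Fc i \<longleftrightarrow> rr i \<or> (i \<in> S \<and> i \<notin> X \<and> m < i)"
proof
  assume "restricted_row (Suc n) S Fc i"
  then show "rr i \<or> (i \<in> S \<and> i \<notin> X \<and> m < i)"
    using new_restricted0 by (auto simp: restricted_row_def)
next
  assume "rr i \<or> (i \<in> S \<and> i \<notin> X \<and> m < i)"
  moreover have "r0 i j \<Longrightarrow> j \<noteq> Suc n" for j using restricted0D col_le by fastforce
  ultimately show "restricted_row (Suc n) S Fc i"
    using new_restricted0 by (auto simp: restricted_row_def)
qed

lemma new_wcol_old: "rr i \<Longrightarrow> wcol (Suc n) S Fc i = wc i"
proof -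
  assume r: "rr i"
  have wn: "wc i \<noteq> Suc n" using white_col[OF r] col_le by fastforce
  have "restricted0 (Suc n) S Fc i (wc i)" using new_restricted0 white_restricted0[OF r] wn by simp
  then have le: "wcol (Suc n) S Fc i \<le> wc i" by (rule T.white_le)
  have "restricted_row (Suc n) S Fc i" using new_restricted_row r by simp
  then have "restricted0 (Suc n) S Fc i (wcol (Suc n) S Fc i)" by (rule T.white_restricted0)
  then have "wc i \<le> wcol (Suc n) S Fc i \<or> wcol (Suc n) S Fc i = Suc n"
    using new_restricted0 white_le by blast
  then show ?thesis using le white_col[OF r] col_le by fastforce
qed

lemma new_wcol_new: "\<not> rr i \<Longrightarrow> i \<in> S \<Longrightarrow> i \<notin> X \<Longrightarrow> m < i \<Longrightarrow> wcol (Suc n) S Fc i = Suc n"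
proof -
  assume a: "\<not> rr i" "i \<in> S" "i \<notin> X" "m < i"
  then have "restricted_row (Suc n) S Fc i" using new_restricted_row by simp
  then have "restricted0 (Suc n) S Fc i (wcol (Suc n) S Fc i)" by (rule T.white_restricted0)
  then show ?thesis using new_restricted0 a(1) by (auto simp: restricted_row_def)
qed

text \<open>How an old path continues in the new tableau: if it ends in a row \<open>r\<close> below
  \<open>m\<close> and outside \<open>X\<close>, row \<open>r\<close> gets a white dot in the new column, whose black dot lies
  in the unrestricted row \<open>m\<close>.\<close>
definition tail :: "nat \<Rightarrow> nat list" where
  "tail k = (if end_row k \<in> S \<and> end_row k \<notin> X \<and> m < end_row k then [end_row k, Suc n] else [])"

abbreviation "P' \<equiv> altpath (Suc n) S Fc"

lemma new_path_new_col: "P' (Suc n) = [Suc n]"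
proof -
  have "\<not> restricted_row (Suc n) S Fc m" using new_restricted_row m_in_X X_unrestricted by simp
  then show ?thesis using T.path_col new_cols new_top_new by simp
qed

lemma new_path_unrestricted: "k \<notin> C \<Longrightarrow> k \<noteq> Suc n \<Longrightarrow> \<not> rr k \<Longrightarrow> P' k = tail k"
proof -
  assume k: "k \<notin> C" "k \<noteq> Suc n" "\<not> rr k"
  then have "k \<notin> cols (Suc n) S" "end_row k = k" using new_cols path_row by (auto simp: end_row_def)
  then show ?thesis
    using T.path_row new_restricted_row new_wcol_new new_path_new_col k by (simp add: tail_def)
qed

lemma new_path: "k \<noteq> Suc n \<Longrightarrow> P' k = P k @ tail k"
proof (induction k rule: path_induct)
  case (1 k)
  show ?case
  proof (cases "k \<in> C")
    case kC: True
    have "P' k = k # P' (tp k)"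
      using T.path_col_step[of k] new_cols new_top_old 1(2) kC by simp
    also have "P' (tp k) = P (tp k) @ tail (tp k)"
      using 1(1)[OF path_measure_col[OF kC]] top_row[OF kC] new_not_row by metis
    also have "tail (tp k) = tail k" using end_row_col_step[OF kC] by (simp add: tail_def)
    finally show ?thesis using path_col_step[OF kC] by simp
  next
    case kC: False
    show ?thesis
    proof (cases "rr k")
      case True
      have "P' k = k # P' (wc k)"
        using T.path_row[of k] new_cols new_restricted_row new_wcol_old kC 1(2) True by simp
      also have "P' (wc k) = P (wc k) @ tail (wc k)"
        using 1(1)[OF path_measure_row[OF True]] col_ne_new[OF white_col[OF True]] by blast
      also have "tail (wc k) = tail k" using end_row_row_step[OF kC True] by (simp add: tail_def)
      finally show ?thesis using path_row[OF kC] True by simp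
    next
      case False
      then show ?thesis using new_path_unrestricted kC 1(2) path_row[OF kC] by simp
    qed
  qed
qed

lemma tail_cases: "tail k = [] \<or> (tail k = [end_row k, Suc n] \<and> end_row k \<in> S \<and> end_row k \<notin> X \<and> m < end_row k)"
  by (simp add: tail_def)

lemma tail_Nil: "tail k = [] \<Longrightarrow> end_row k \<in> S \<Longrightarrow> end_row k \<notin> X \<Longrightarrow> end_row k < m"
  using m_in_X by (simp add: tail_def split: if_splits) (metis linorder_neqE_nat)

lemma tail_subset: "set (tail k) \<subseteq> {end_row k, Suc n}"
  by (auto simp: tail_def)

lemma end_row_not_X: "P k \<noteq> [] \<Longrightarrow> end_row k \<notin> X"
  using end_row_nonempty[of k] X_no_black_dot[of "end_row k" "last (P k)"] by auto

abbreviation "D' \<equiv> dotpos (Suc n) S Fc"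
abbreviation "D \<equiv> dotpos n S F"

lemma new_dotpos_col: "x \<in> C \<Longrightarrow> D' x = (tp x, x)"
proof -
  assume x: "x \<in> C"
  then have "x \<in> cols (Suc n) S" "x \<noteq> Suc n" using new_cols col_le[OF x] by auto
  then show ?thesis using T.dotpos_col new_top_old by simp
qed

lemma new_dotpos_new_col: "D' (Suc n) = (m, Suc n)"
proof -
  have "Suc n \<in> cols (Suc n) S" using new_cols by simp
  then show ?thesis using T.dotpos_col new_top_new by simp
qed

lemma new_dotpos_new_white: "e \<in> S \<Longrightarrow> \<not> rr e \<Longrightarrow> e \<notin> X \<Longrightarrow> m < e \<Longrightarrow> D' e = (e, Suc n)"
  using T.dotpos_row[of e] new_wcol_new[of e] by simp

lemma new_dotpos_old: "x \<in> set (P k) \<Longrightarrow> D' x = D x"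
proof -
  assume "x \<in> set (P k)"
  then consider "x \<in> C" | "rr x" using path_labels by blast
  then show ?thesis
  proof cases
    case 1
    then show ?thesis using new_dotpos_col dotpos_col by simp
  next
    case 2
    then have "x \<in> S" using restricted_row_in_rows by blast
    then show ?thesis using dotpos_row[of x] T.dotpos_row[of x] new_wcol_old[OF 2] by simp
  qed
qed

lemma last_dot_col:
  assumes "j \<in> C"
  shows "P j \<noteq> [] \<and> last (P j) \<noteq> Suc n \<and> end_row j \<in> S \<and> end_row j \<notin> X \<and>
    D' (last (P j)) = (end_row j, last (P j)) \<and> D (last (P j)) = (end_row j, last (P j))"
proof -
  have ne: "P j \<noteq> []" using path_col_nonempty[OF assms] .
  then have l: "last (P j) \<in> C" "end_row j = tp (last (P j))" "end_row j \<in> S"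
    using end_row_nonempty[OF ne] by auto
  then show ?thesis
    using ne end_row_not_X[OF ne] col_le[OF l(1)] new_dotpos_col[OF l(1)] dotpos_col[OF l(1)] by auto
qed

text \<open>A
  path extended by a tail now ends in row \<open>m\<close>, while an unextended path of a column
  ends above \<open>m\<close>; in each case the outcome is still decided by the old ending rows.\<close>
lemma new_path_gt_only_k_extended:
  assumes j: "j \<in> C" and tj: "tail j = []" and tk: "tail k = [end_row k, Suc n]" "m < end_row k"
  shows "\<not> ends_gt D' j k (P j @ tail j) (P k @ tail k) \<and> \<not> end_row k < end_row j"
proof -
  note lj = last_dot_col[OF j]
  have "end_row j < m" using tail_Nil[OF tj] lj by blast
  then show ?thesis
    using tj tk ends_gt_last_differ[of "P j" "P k @ [end_row k, Suc n]" D' j k] lj new_dotpos_new_col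
    by auto
qed

lemma new_path_gt_only_j_extended:
  assumes j: "j \<in> C" and jk: "j < k"
    and tj: "tail j = [end_row j, Suc n]" "m < end_row j" and tk: "tail k = []"
  shows "ends_gt D' j k (P j @ tail j) (P k @ tail k) \<longleftrightarrow> end_row k < end_row j"
proof (cases "P k = []")
  case True
  then have "end_row k = k" by (simp add: end_row_def)
  then show ?thesis
    using tj tk True ends_gt_Nil_right[of "P j @ [end_row j, Suc n]" D' j k] new_dotpos_new_col
      end_row_col[OF j] jk by simp
next
  case pk: False
  then have lk: "last (P k) \<in> C" "end_row k = tp (last (P k))" "end_row k \<in> S"
    using end_row_nonempty[OF pk] by auto
  have "end_row k < m" using tail_Nil[OF tk lk(3) end_row_not_X[OF pk]] .
  then show ?thesis
    using tj tk ends_gt_last_differ[OF _ pk, of "P j @ [end_row j, Suc n]" D' j k] new_dotpos_new_col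
      new_dotpos_col[OF lk(1)] lk(2) col_le[OF lk(1)] by auto
qed

text \<open>Both paths extended: after dropping the common last dot, the new white dots in
  the two ending rows are compared.\<close>
lemma new_path_gt_both_extended:
  assumes diff: "end_row j \<noteq> end_row k"
    and tj: "tail j = [end_row j, Suc n]" "end_row j \<in> S" "end_row j \<notin> X" "m < end_row j"
    and tk: "tail k = [end_row k, Suc n]" "end_row k \<in> S" "end_row k \<notin> X" "m < end_row k"
  shows "ends_gt D' j k (P j @ tail j) (P k @ tail k) \<longleftrightarrow> end_row k < end_row j"
proof -
  have "D' (end_row j) = (end_row j, Suc n)" "D' (end_row k) = (end_row k, Suc n)"
    using tj tk new_dotpos_new_white end_row_unrestricted by auto
  moreover have "ends_gt D' j k (P j @ tail j) (P k @ tail k)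
      = ends_gt D' j k (P j @ [end_row j]) (P k @ [end_row k])"
    using tj tk ends_gt_append[of D' j k "P j @ [end_row j]" "[Suc n]" "P k @ [end_row k]"] by simp
  ultimately show ?thesis
    using ends_gt_last_differ[of "P j @ [end_row j]" "P k @ [end_row k]" D' j k] diff by auto
qed

lemma new_path_gt_end_rows:
  assumes j: "j \<in> C" and jk: "j < k" and diff: "end_row j \<noteq> end_row k"
  shows "ends_gt D' j k (P j @ tail j) (P k @ tail k) \<longleftrightarrow> end_row k < end_row j"
proof -
  consider "tail j = []" "tail k = []"
    | "tail j = []" "tail k = [end_row k, Suc n]" "m < end_row k"
    | "tail j = [end_row j, Suc n]" "m < end_row j" "tail k = []"
    | "tail j = [end_row j, Suc n]" "end_row j \<in> S" "end_row j \<notin> X" "m < end_row j"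
      "tail k = [end_row k, Suc n]" "end_row k \<in> S" "end_row k \<notin> X" "m < end_row k"
    using tail_cases[of j] tail_cases[of k] by blast
  then show ?thesis
  proof cases
    case 1
    have "ends_gt D' j k (P j) (P k) = ends_gt D j k (P j) (P k)"
      using new_dotpos_old by (intro ends_gt_cong) blast
    then show ?thesis using 1 path_gt_end_rows[OF j jk diff] by simp
  qed (use new_path_gt_only_k_extended[OF j] new_path_gt_only_j_extended[OF j jk]
        new_path_gt_both_extended[OF diff] in blast)+
qed

text \<open>Adding the column does not change the comparison between a column and a later
  label: paths ending in the same row receive the same tail.\<close>
lemma new_path_gt:
  assumes j: "j \<in> C" and jk: "j < k"
  shows "ends_gt D' j k (P j @ tail j) (P k @ tail k) \<longleftrightarrow> ends_gt D j k (P j) (P k)"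
proof (cases "end_row j = end_row k")
  case True
  then have "tail j = tail k" by (simp add: tail_def)
  then have "ends_gt D' j k (P j @ tail j) (P k @ tail k) = ends_gt D' j k (P j) (P k)"
    using ends_gt_append by simp
  also have "\<dots> = ends_gt D j k (P j) (P k)"
    using new_dotpos_old by (intro ends_gt_cong) blast
  finally show ?thesis .
next
  case False
  then show ?thesis using new_path_gt_end_rows[OF j jk False] path_gt_end_rows[OF j jk False] by simp
qed

text \<open>The pair \<open>(j, n+1)\<close> is never an inversion: either the path of \<open>j\<close> runs into the
  new column, or it ends above the black dot of the new column.\<close>
lemma new_col_no_inversion:
  assumes j: "j \<in> C" and notin: "Suc n \<notin> set (P' j)"
  shows "\<not> ends_gt D' j (Suc n) (P' j) (P' (Suc n))"
proof -
  note lj = last_dot_col[OF j]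
  have "P' j = P j @ tail j" using new_path col_le[OF j] by fastforce
  then have e: "P' j = P j" "tail j = []" using notin tail_cases[of j] by auto
  have "end_row j < m" using tail_Nil[OF e(2)] lj by blast
  then show ?thesis
    using e ends_gt_last_differ[of "P j" "[Suc n]" D' j "Suc n"] lj new_path_new_col new_dotpos_new_col
    by auto
qed

theorem new_inversions: "inversions (Suc n) (S, Fc) = inversions n (S, F)"
proof (intro set_eqI iffI)
  fix x assume "x \<in> inversions (Suc n) (S, Fc)"
  then obtain j k where x: "x = (j,k)" and j: "j \<in> cols (Suc n) S" and jk: "j < k" and kN: "k \<le> Suc n"
    and notin: "k \<notin> set (P' j)" and gt: "path_gt (Suc n) S Fc j k"
    by (auto simp: inversions_def Let_def)
  have jC: "j \<in> C" using j jk kN new_cols by auto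
  have k: "k \<noteq> Suc n"
    using new_col_no_inversion[OF jC] notin gt by (auto simp: path_gt_ends_gt)
  have "P' j = P j @ tail j" "P' k = P k @ tail k" using new_path col_le[OF jC] k by auto
  moreover have "k \<notin> set (tail j)" using tail_subset[of j] end_row_col[OF jC] jk k by auto
  ultimately show "x \<in> inversions n (S, F)"
    using x jC jk kN k notin gt new_path_gt[OF jC jk] by (auto simp: inversions_def path_gt_ends_gt)
next
  fix x assume "x \<in> inversions n (S, F)"
  then obtain j k where x: "x = (j,k)" and jC: "j \<in> C" and jk: "j < k" and kn: "k \<le> n"
    and notin: "k \<notin> set (P j)" and gt: "path_gt n S F j k"
    by (auto simp: inversions_def Let_def)
  have "P' j = P j @ tail j" "P' k = P k @ tail k" using new_path col_le[OF jC] kn by auto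
  moreover have "k \<notin> set (tail j)" using tail_subset[of j] end_row_col[OF jC] jk kn by auto
  ultimately show "x \<in> inversions (Suc n) (S, Fc)"
    using x jC jk kn notin gt new_path_gt[OF jC jk] new_cols
    by (auto simp: inversions_def path_gt_ends_gt Let_def)
qed

theorem new_free_rows: "free_rows (Suc n) (S, Fc) = {r \<in> X. m < r} \<union> {r \<in> free_rows n (S,F). r < m}"
proof (intro set_eqI iffI)
  fix r assume "r \<in> free_rows (Suc n) (S, Fc)"
  then have r: "r \<in> S" "\<not> restricted_row (Suc n) S Fc r" "\<forall>c\<in>cols (Suc n) S. top1 Fc c \<noteq> r"
    by (auto simp: free_rows_def)
  have unr: "\<not> rr r" and below: "\<not> (r \<notin> X \<and> m < r)" using r(1,2) new_restricted_row by auto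
  have "\<forall>c\<in>C. tp c \<noteq> r" using r(3) new_cols new_top_old col_ne_new by fastforce
  moreover have "r \<noteq> m" using r(3) new_cols new_top_new by auto
  ultimately show "r \<in> {r \<in> X. m < r} \<union> {r \<in> free_rows n (S,F). r < m}"
    using r(1) unr below by (cases "m < r") (auto simp: free_rows_def)
next
  fix r assume a: "r \<in> {r \<in> X. m < r} \<union> {r \<in> free_rows n (S,F). r < m}"
  then have r: "r \<in> S" "r \<noteq> m" "\<not> rr r" "\<forall>c\<in>C. tp c \<noteq> r"
    using X_rows X_free by (auto simp: free_rows_def)
  have "\<not> restricted_row (Suc n) S Fc r" using a r(3) new_restricted_row by auto
  moreover have "\<forall>c\<in>cols (Suc n) S. top1 Fc c \<noteq> r"
    using r(2,4) new_cols new_top_new new_top_old col_ne_new by auto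
  ultimately show "r \<in> free_rows (Suc n) (S, Fc)" using r(1) by (simp add: free_rows_def)
qed
end


lemma remove_bottom_row:
  assumes pt: "perm_tableau (Suc n) (S,F)" and N: "Suc n \<in> S"
  shows "perm_tableau n (S - {Suc n}, F)"
proof -
  interpret T: perm_tab "Suc n" S F using pt by unfold_locales
  have c: "cols n (S - {Suc n}) = cols (Suc n) S"
    unfolding cols_def using N by (intro set_eqI) (auto simp: le_Suc_eq)
  have ce: "cells n (S - {Suc n}) = cells (Suc n) S"
    unfolding cells_def c by (intro set_eqI) (auto simp: cols_def)
  show ?thesis
  proof (rule perm_tableauI)
    show "S - {Suc n} \<subseteq> {1..n}" using T.rows_sub by (auto simp: le_Suc_eq)
    show "\<exists>i\<in>S - {Suc n}. i < j" if "j \<in> cols n (S - {Suc n})" for j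
      using T.col_has_row[of j] that c by (force simp: cols_def)
    show "F \<subseteq> cells n (S - {Suc n})" using T.ones_sub_cells ce by simp
    show "\<exists>i. (i,j) \<in> F" if "j \<in> cols n (S - {Suc n})" for j using T.col_has_one that c by simp
    show False if "(i,j) \<in> cells n (S - {Suc n})" "(i,j) \<notin> F" "i' < i" "(i',j) \<in> F" "j < j'" "(i,j') \<in> F"
      for i j i' j' using T.no_one_left_of_restricted[of i j i' j'] that ce by simp
  qed
qed

locale remove_column = T: perm_tab "Suc n" S F for n S F +
  assumes new_not_row: "Suc n \<notin> S"
begin

definition "F0 = {p \<in> F. snd p \<noteq> Suc n}"
definition "X = {i. (i, Suc n) \<in> F}"

lemma cols_eq: "cols (Suc n) S = insert (Suc n) (cols n S)"
  unfolding cols_def using new_not_row by (intro set_eqI) (auto simp: le_Suc_eq)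

lemma cols_le: "j \<in> cols n S \<Longrightarrow> j \<le> n"
  by (simp add: cols_def)

lemma cells_sub: "cells n S \<subseteq> cells (Suc n) S"
  unfolding cells_def cols_eq by auto

lemma old_perm_tableau: "perm_tableau n (S, F0)"
proof (rule perm_tableauI)
  show "S \<subseteq> {1..n}" using T.rows_sub new_not_row by (auto simp: le_Suc_eq)
  show "\<exists>i\<in>S. i < j" if "j \<in> cols n S" for j using T.col_has_row[of j] that cols_eq by simp
  show "F0 \<subseteq> cells n S"
  proof
    fix p assume "p \<in> F0"
    then obtain i j where p: "p = (i,j)" "(i,j) \<in> F" "j \<noteq> Suc n" by (cases p) (auto simp: F0_def)
    then have "i \<in> S" "j \<in> cols (Suc n) S" "i < j" using T.onesD by auto
    then show "p \<in> cells n S" using p cols_eq by (simp add: cells_def)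
  qed
  show "\<exists>i. (i,j) \<in> F0" if "j \<in> cols n S" for j
  proof -
    have "j \<in> cols (Suc n) S" using that cols_eq by simp
    then obtain i where "(i,j) \<in> F" using T.col_has_one by blast
    moreover have "j \<noteq> Suc n" using that cols_le by fastforce
    ultimately show ?thesis by (auto simp: F0_def)
  qed
  show False if a: "(i,j) \<in> cells n S" "(i,j) \<notin> F0" "i' < i" "(i',j) \<in> F0" "j < j'" "(i,j') \<in> F0"
    for i j i' j'
  proof -
    have "j \<noteq> Suc n" using a(1) by (auto simp: cells_def dest: cols_le)
    then have "(i,j) \<notin> F" using a(2) by (simp add: F0_def)
    moreover have "(i,j) \<in> cells (Suc n) S" using a(1) cells_sub by blast
    ultimately show False using T.no_one_left_of_restricted[of i j i' j'] a(3-6) by (simp add: F0_def)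
  qed
qed

sublocale T0: perm_tab n S F0
  using old_perm_tableau by unfold_locales

lemma X_nonempty: "X \<noteq> {}"
  using T.col_has_one[of "Suc n"] cols_eq by (auto simp: X_def)

lemma F_eq: "F = F0 \<union> (\<lambda>i. (i, Suc n)) ` X"
  by (auto simp: F0_def X_def)

lemma X_unrestricted: "r \<in> X \<Longrightarrow> \<not> T.rr r"
  by (rule T.unrestricted_if_one_rightmost[of r "Suc n"]) (auto simp: X_def cols_def dest!: T.restricted0D)

text \<open>Inversion-freeness forces the 1's of the leftmost column into free rows: a 1 in
  row \<open>r\<close> containing the black dot of a column \<open>c\<close> makes \<open>(c, n+1)\<close> an inversion.\<close>
lemma inversion_if_not_free:
  assumes r: "r \<in> X" "r \<notin> free_rows n (S, F0)"
  shows "inversions (Suc n) (S, F) \<noteq> {}"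
proof -
  have rF: "(r, Suc n) \<in> F" using r by (simp add: X_def)
  have rS: "r \<in> S" using T.onesD[OF rF] by blast
  have "\<not> T0.rr r"
  proof
    assume "T0.rr r"
    then obtain j where j: "T0.r0 r j" by (auto simp: restricted_row_def)
    then have jn: "j \<le> n" using T0.restricted0D cols_le by blast
    have "T.r0 r j" using j jn cells_sub by (auto simp: restricted0_def F0_def)
    then show False using T.restricted0_right_of_ones[OF _ rF] jn by fastforce
  qed
  then obtain c where c: "c \<in> cols n S" "top1 F0 c = r" using r(2) rS by (auto simp: free_rows_def)
  have cN: "c \<noteq> Suc n" using c cols_le by fastforce
  have tc: "top1 F c = r" using c(2) cN unfolding top1_def F0_def by simp
  have cT: "c \<in> cols (Suc n) S" using c cols_eq by simp
  have Pc: "T.P c = [c]" using T.path_col[OF cT] tc X_unrestricted r(1) by simp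
  define m0 where "m0 = top1 F (Suc n)"
  have NT: "Suc n \<in> cols (Suc n) S" using cols_eq by simp
  have m0F: "(m0, Suc n) \<in> F" using T.top_one[OF NT] by (simp add: m0_def)
  have PN: "T.P (Suc n) = [Suc n]"
    using T.path_col[OF NT] X_unrestricted[of m0] m0F by (simp add: m0_def X_def)
  have m0r: "m0 \<le> r" using T.top_le[OF rF] by (simp add: m0_def)
  have "ends_gt (dotpos (Suc n) S F) c (Suc n) [c] [Suc n]"
    using ends_gt_last_differ[of "[c]" "[Suc n]" "dotpos (Suc n) S F" c "Suc n"] cN
      T.dotpos_col[OF cT] T.dotpos_col[OF NT] tc m0r cols_le[OF c(1)] by (auto simp: m0_def)
  then have "(c, Suc n) \<in> inversions (Suc n) (S, F)"
    using cT cN cols_le[OF c(1)] Pc PN by (simp add: inversions_def path_gt_ends_gt)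
  then show ?thesis by blast
qed

end


section \<open>Inversion-free tableaux as a recursively generated family\<close>

definition inv_free :: "nat \<Rightarrow> (nat set \<times> (nat \<times> nat) set) set" where
  "inv_free n = {T. perm_tableau n T \<and> tab_inv n T = 0}"

definition add_row :: "nat \<Rightarrow> nat set \<times> (nat \<times> nat) set \<Rightarrow> nat set \<times> (nat \<times> nat) set" where
  "add_row n T = (insert (Suc n) (fst T), snd T)"

definition add_col :: "nat \<Rightarrow> nat set \<times> (nat \<times> nat) set \<Rightarrow> nat set \<Rightarrow> nat set \<times> (nat \<times> nat) set" where
  "add_col n T X = (fst T, snd T \<union> (\<lambda>i. (i, Suc n)) ` X)"

definition tab_children :: "nat \<Rightarrow> nat set \<times> (nat \<times> nat) set \<Rightarrow> (nat set \<times> (nat \<times> nat) set) set" where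
  "tab_children n T = insert (add_row n T) (add_col n T ` {X. X \<noteq> {} \<and> X \<subseteq> free_rows n T})"

lemma inv_free_iff: "T \<in> inv_free n \<longleftrightarrow> perm_tableau n T \<and> inversions n T = {}"
  by (simp add: inv_free_def tab_inv_0_iff)

lemma finite_inv_free: "finite (inv_free n)"
proof -
  have "inv_free n \<subseteq> Pow {1..n} \<times> Pow ({1..n} \<times> {1..n})"
    unfolding inv_free_def perm_tableau_def Let_def cells_def cols_def by auto
  then show ?thesis by (rule finite_subset) simp
qed

lemma new_label_not_row: "T \<in> inv_free n \<Longrightarrow> Suc n \<notin> fst T"
  by (auto simp: inv_free_def perm_tableau_def Let_def)

lemma new_label_not_col: "T \<in> inv_free n \<Longrightarrow> p \<in> snd T \<Longrightarrow> snd p \<le> n"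
  unfolding inv_free_def perm_tableau_def Let_def cells_def cols_def by auto

lemma free_rows_sub_labels: "T \<in> inv_free n \<Longrightarrow> free_rows n T \<subseteq> {1..n}"
  using free_rows_sub by (simp add: inv_free_def)

lemma card_free_rows_le: "T \<in> inv_free n \<Longrightarrow> card (free_rows n T) \<le> n"
  using card_mono[OF finite_atLeastAtMost free_rows_sub_labels] by simp

lemma finite_free_rows: "T \<in> inv_free n \<Longrightarrow> finite (free_rows n T)"
  using finite_subset[OF free_rows_sub_labels] by simp

lemma inv_free_Suc_sub: "inv_free (Suc n) \<subseteq> (\<Union>T\<in>inv_free n. tab_children n T)"
proof
  fix T assume "T \<in> inv_free (Suc n)"
  then obtain S F where T: "T = (S,F)" and pt: "perm_tableau (Suc n) (S,F)"
    and no_inv: "inversions (Suc n) (S,F) = {}"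
    by (cases T) (auto simp: inv_free_iff)
  show "T \<in> (\<Union>T\<in>inv_free n. tab_children n T)"
  proof (cases "Suc n \<in> S")
    case True
    have pt0: "perm_tableau n (S - {Suc n}, F)" using remove_bottom_row[OF pt True] .
    interpret T0: perm_tab n "S - {Suc n}" F using pt0 by unfold_locales
    have S: "insert (Suc n) (S - {Suc n}) = S" using True by blast
    have "(S - {Suc n}, F) \<in> inv_free n"
      using pt0 T0.add_row_inversions no_inv S by (simp add: inv_free_iff)
    moreover have "T = add_row n (S - {Suc n}, F)" using T S by (simp add: add_row_def)
    ultimately show ?thesis by (auto simp: tab_children_def)
  next
    case False
    interpret R: remove_column n S F using pt False by unfold_locales
    have X: "R.X \<subseteq> free_rows n (S, R.F0)" using R.inversion_if_not_free no_inv by blast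
    interpret A: add_column n S R.F0 R.X using X R.X_nonempty by unfold_locales
    have F: "A.Fc = F" using R.F_eq by (simp add: A.Fc_def)
    have "(S, R.F0) \<in> inv_free n"
      using A.new_inversions F no_inv R.old_perm_tableau by (simp add: inv_free_iff)
    moreover have "T = add_col n (S, R.F0) R.X" using T F by (simp add: add_col_def A.Fc_def)
    ultimately show ?thesis using X R.X_nonempty by (auto simp: tab_children_def)
  qed
qed

lemma tab_children_sub: "T \<in> inv_free n \<Longrightarrow> tab_children n T \<subseteq> inv_free (Suc n)"
proof
  fix T' assume T: "T \<in> inv_free n" and T': "T' \<in> tab_children n T"
  obtain S F where SF: "T = (S,F)" by (cases T)
  then have pt: "perm_tableau n (S,F)" and no_inv: "inversions n (S,F) = {}"
    using T by (auto simp: inv_free_iff)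
  interpret T0: perm_tab n S F using pt by unfold_locales
  from T' consider "T' = add_row n T" | X where "X \<noteq> {}" "X \<subseteq> free_rows n T" "T' = add_col n T X"
    by (auto simp: tab_children_def)
  then show "T' \<in> inv_free (Suc n)"
  proof cases
    case 1
    then show ?thesis using T0.add_row_perm_tableau T0.add_row_inversions no_inv SF
      by (simp add: inv_free_iff add_row_def)
  next
    case (2 X)
    interpret A: add_column n S F X using 2 SF by unfold_locales auto
    show ?thesis using A.new_perm_tableau A.new_inversions no_inv 2 SF
      by (simp add: inv_free_iff add_col_def A.Fc_def)
  qed
qed

lemma inv_free_Suc: "inv_free (Suc n) = (\<Union>T\<in>inv_free n. tab_children n T)"
  using inv_free_Suc_sub tab_children_sub by blast

lemma add_col_inj:
  assumes T: "T \<in> inv_free n" and T': "T' \<in> inv_free n" and eq: "add_col n T X = add_col n T' X'"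
  shows "T = T' \<and> X = X'"
proof -
  have old: "snd U = {p \<in> snd (add_col n U Z). snd p \<noteq> Suc n}" if "U \<in> inv_free n" for U Z
    using new_label_not_col[OF that] by (fastforce simp: add_col_def)
  have new: "Z = {i. (i, Suc n) \<in> snd (add_col n U Z)}" if "U \<in> inv_free n" for U Z
    using new_label_not_col[OF that] by (fastforce simp: add_col_def)
  have "fst T = fst T'" using eq by (simp add: add_col_def)
  moreover have "snd T = snd T'" using old[OF T, of X] old[OF T', of X'] eq by simp
  moreover have "X = X'" using new[OF T, of X] new[OF T', of X'] eq by simp
  ultimately show ?thesis by (simp add: prod_eq_iff)
qed

lemma add_row_inj:
  assumes "T \<in> inv_free n" "T' \<in> inv_free n" "add_row n T = add_row n T'"
  shows "T = T'"
proof -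
  have "fst U = fst (add_row n U) - {Suc n}" if "U \<in> inv_free n" for U
    using new_label_not_row[OF that] by (auto simp: add_row_def)
  then have "fst T = fst T'" using assms by metis
  moreover have "snd T = snd T'" using assms(3) by (simp add: add_row_def)
  ultimately show ?thesis by (simp add: prod_eq_iff)
qed

lemma add_row_ne_add_col: "T' \<in> inv_free n \<Longrightarrow> add_row n T \<noteq> add_col n T' X"
  using new_label_not_row[of T' n] by (auto simp: add_row_def add_col_def)

lemma tab_children_disjoint: "disjoint_family_on (tab_children n) (inv_free n)"
  unfolding disjoint_family_on_def
proof (intro ballI impI)
  fix T T' assume T: "T \<in> inv_free n" and T': "T' \<in> inv_free n" and ne: "T \<noteq> T'"
  have "U \<notin> tab_children n T'" if U: "U \<in> tab_children n T" for U
  proof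
    assume U': "U \<in> tab_children n T'"
    from U consider "U = add_row n T" | X where "U = add_col n T X"
      by (auto simp: tab_children_def)
    then show False
    proof cases
      case 1
      then show False using U' add_row_inj[OF T T'] add_row_ne_add_col[OF T', of T] ne
        by (auto simp: tab_children_def)
    next
      case (2 X)
      then show False using U' add_col_inj[OF T T'] add_row_ne_add_col[OF T, of T'] ne
        by (auto simp: tab_children_def dest: sym)
    qed
  qed
  then show "tab_children n T \<inter> tab_children n T' = {}" by blast
qed

lemma free_rows_add_row: "T \<in> inv_free n \<Longrightarrow> free_rows (Suc n) (add_row n T) = insert (Suc n) (free_rows n T)"
proof -
  assume "T \<in> inv_free n"
  moreover obtain S F where "T = (S,F)" by (cases T)
  ultimately show ?thesis
    using perm_tab.add_row_free_rows[of n S F] by (simp add: inv_free_def perm_tab_def add_row_def)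
qed

lemma free_rows_add_col:
  "T \<in> inv_free n \<Longrightarrow> X \<noteq> {} \<Longrightarrow> X \<subseteq> free_rows n T \<Longrightarrow>
   free_rows (Suc n) (add_col n T X) = {r \<in> X. Min X < r} \<union> {r \<in> free_rows n T. r < Min X}"
proof -
  assume a: "T \<in> inv_free n" "X \<noteq> {}" "X \<subseteq> free_rows n T"
  obtain S F where T: "T = (S,F)" by (cases T)
  interpret A: add_column n S F X using a T by unfold_locales (auto simp: inv_free_def)
  show ?thesis using A.new_free_rows T by (simp add: add_col_def A.Fc_def A.m_def)
qed


section \<open>Set partitions as a recursively generated family\<close>

text \<open>The statistic is the set of singletons.\<close>

definition singletons :: "'a set set \<Rightarrow> 'a set" where
  "singletons P = {x. {x} \<in> P}"

definition join_singletons :: "'a \<Rightarrow> 'a set set \<Rightarrow> 'a set \<Rightarrow> 'a set set" where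
  "join_singletons a P Y = insert (insert a Y) (P - (\<lambda>y. {y}) ` Y)"

lemma partition_on_iff:
  "partition_on A P \<longleftrightarrow> \<Union>P = A \<and> (\<forall>p\<in>P. \<forall>q\<in>P. p \<noteq> q \<longrightarrow> p \<inter> q = {}) \<and> {} \<notin> P"
  by (auto simp: partition_on_def disjoint_def)

lemma singletons_sub: "partition_on A P \<Longrightarrow> singletons P \<subseteq> A"
  unfolding partition_on_iff singletons_def by blast

lemma partition_add_singleton: "partition_on A P \<Longrightarrow> a \<notin> A \<Longrightarrow> partition_on (insert a A) (insert {a} P)"
  unfolding partition_on_iff by blast

lemma partition_join_singletons:
  assumes P: "partition_on A P" and a: "a \<notin> A" and Y: "Y \<subseteq> singletons P"
  shows "partition_on (insert a A) (join_singletons a P Y)"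
proof -
  have U: "\<Union>P = A" and dP: "\<And>p q. p \<in> P \<Longrightarrow> q \<in> P \<Longrightarrow> p \<noteq> q \<Longrightarrow> p \<inter> q = {}" and ne: "{} \<notin> P"
    using P by (auto simp: partition_on_iff)
  have sY: "\<And>y. y \<in> Y \<Longrightarrow> {y} \<in> P" using Y by (auto simp: singletons_def)
  then have block: "\<And>p y. p \<in> P \<Longrightarrow> y \<in> Y \<Longrightarrow> y \<in> p \<Longrightarrow> p = {y}" using dP by blast
  have rest: "\<Union>(P - (\<lambda>y. {y}) ` Y) = A - Y" using U block sY by blast
  have apart: "p \<inter> insert a Y = {}" if "p \<in> P - (\<lambda>y. {y}) ` Y" for p
    using that U a block by blast
  show ?thesis unfolding partition_on_iff join_singletons_def
    using rest singletons_sub[OF P] Y apart dP ne by (auto simp: Int_commute)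
qed

lemma partition_decompose:
  assumes Q: "partition_on (insert a A) Q" and a: "a \<notin> A"
  shows "(\<exists>P. partition_on A P \<and> Q = insert {a} P) \<or>
         (\<exists>P Y. partition_on A P \<and> Y \<noteq> {} \<and> Y \<subseteq> singletons P \<and> Q = join_singletons a P Y)"
proof -
  have U: "\<Union>Q = insert a A" and dj: "\<And>p q. p\<in>Q \<Longrightarrow> q\<in>Q \<Longrightarrow> p \<noteq> q \<Longrightarrow> p \<inter> q = {}"
    and ne: "{} \<notin> Q"
    using Q by (auto simp: partition_on_iff)
  obtain K where K: "K \<in> Q" "a \<in> K" using U by blast
  have UK: "\<Union>(Q - {K}) = insert a A - K" using U dj K by blast
  show ?thesis
  proof (cases "K = {a}")
    case True
    have "partition_on A (Q - {{a}})" unfolding partition_on_iff using UK True dj ne a by auto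
    moreover have "Q = insert {a} (Q - {{a}})" using K True by blast
    ultimately show ?thesis by blast
  next
    case False
    define Y where "Y = K - {a}"
    define P where "P = (Q - {K}) \<union> (\<lambda>y. {y}) ` Y"
    have Yne: "Y \<noteq> {}" using False K(2) by (auto simp: Y_def)
    have sK: "\<And>y r. y \<in> Y \<Longrightarrow> r \<in> Q - {K} \<Longrightarrow> {y} \<inter> r = {}"
      using dj K(1) by (auto simp: Y_def)
    have "partition_on A P" unfolding partition_on_iff
    proof (intro conjI)
      show "\<Union>P = A" using UK U K a by (auto simp: P_def Y_def)
      show "{} \<notin> P" using ne by (auto simp: P_def)
      show "\<forall>p\<in>P. \<forall>q\<in>P. p \<noteq> q \<longrightarrow> p \<inter> q = {}"
        using dj sK by (auto simp: P_def) blast+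
    qed
    moreover have "Y \<subseteq> singletons P" by (auto simp: singletons_def P_def)
    moreover have "join_singletons a P Y = Q"
    proof -
      have "P - (\<lambda>y. {y}) ` Y = Q - {K}" using sK by (auto simp: P_def)
      moreover have "insert a Y = K" using K(2) by (auto simp: Y_def)
      ultimately show ?thesis using K(1) by (auto simp: join_singletons_def)
    qed
    ultimately show ?thesis using Yne by blast
  qed
qed

text \<open>A joined partition determines \<open>P\<close> and \<open>Y\<close>: \<open>insert a Y\<close> is the block of \<open>a\<close>.\<close>
lemma join_singletons_inj:
  assumes P: "partition_on A P" "Y \<subseteq> singletons P" and P': "partition_on A P'" "Y' \<subseteq> singletons P'"
    and a: "a \<notin> A" and eq: "join_singletons a P Y = join_singletons a P' Y'"
  shows "P = P' \<and> Y = Y'"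
proof -
  have block: "{K \<in> join_singletons a P Y. a \<in> K} = {insert a Y}"
    if "partition_on A P" for P Y
    using that a by (auto simp: join_singletons_def partition_on_iff)
  have "a \<notin> Y" "a \<notin> Y'" using singletons_sub[OF P(1)] singletons_sub[OF P'(1)] P(2) P'(2) a by auto
  moreover have "insert a Y = insert a Y'" using block[OF P(1), of Y] block[OF P'(1), of Y'] eq by simp
  ultimately have YY: "Y = Y'" by (metis insert_ident)
  have recover: "P = (join_singletons a P Y - {insert a Y}) \<union> (\<lambda>y. {y}) ` Y"
    if "partition_on A P" "Y \<subseteq> singletons P" for P Y
  proof -
    have "insert a Y \<notin> P" using that(1) a by (auto simp: partition_on_iff)
    moreover have "(\<lambda>y. {y}) ` Y \<subseteq> P" using that(2) by (auto simp: singletons_def)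
    ultimately show ?thesis by (auto simp: join_singletons_def)
  qed
  have "P = P'" using recover[OF P] recover[OF P'] eq YY by simp
  then show ?thesis using YY by simp
qed

lemma add_singleton_ne_join:
  assumes P': "partition_on A P'" "Y \<noteq> {}" "Y \<subseteq> singletons P'" and a: "a \<notin> A"
  shows "insert {a} P \<noteq> join_singletons a P' Y"
proof
  assume "insert {a} P = join_singletons a P' Y"
  then have "{a} \<in> join_singletons a P' Y" by blast
  moreover have "a \<notin> Y" using singletons_sub[OF P'(1)] P'(3) a by auto
  moreover have "{a} \<notin> P'" using P'(1) a by (auto simp: partition_on_iff)
  ultimately show False using P'(2) by (auto simp: join_singletons_def)
qed

lemma singletons_add_singleton:
  "partition_on A P \<Longrightarrow> a \<notin> A \<Longrightarrow> singletons (insert {a} P) = insert a (singletons P) \<and> a \<notin> singletons P"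
  using singletons_sub[of A P] by (auto simp: singletons_def)

lemma singletons_join:
  assumes P: "partition_on A P" and a: "a \<notin> A" and Y: "Y \<noteq> {}" "Y \<subseteq> singletons P"
  shows "singletons (join_singletons a P Y) = singletons P - Y"
proof -
  have "a \<notin> Y" using singletons_sub[OF P] Y(2) a by auto
  then have "insert a Y \<noteq> {x}" for x using Y(1) by auto
  then show ?thesis by (auto simp: singletons_def join_singletons_def)
qed

definition partitions :: "nat \<Rightarrow> nat set set set" where
  "partitions n = {P. partition_on {1..n} P}"

definition part_children :: "nat \<Rightarrow> nat set set \<Rightarrow> nat set set set" where
  "part_children n P =
     insert (insert {Suc n} P) (join_singletons (Suc n) P ` {Y. Y \<noteq> {} \<and> Y \<subseteq> singletons P})"

lemma finite_partitions: "finite (partitions n)"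
  using finitely_many_partition_on[of "{1..n}"] by (simp add: partitions_def)

lemma labels_Suc: "{1..Suc n} = insert (Suc n) {1..n}" "Suc n \<notin> {1..n}"
  by auto

lemma partitions_Suc: "partitions (Suc n) = (\<Union>P\<in>partitions n. part_children n P)"
proof (intro set_eqI iffI)
  fix Q assume "Q \<in> partitions (Suc n)"
  then have "partition_on (insert (Suc n) {1..n}) Q" unfolding partitions_def labels_Suc(1) by simp
  from partition_decompose[OF this labels_Suc(2)]
  show "Q \<in> (\<Union>P\<in>partitions n. part_children n P)"
    by (auto simp: partitions_def part_children_def)
next
  fix Q assume "Q \<in> (\<Union>P\<in>partitions n. part_children n P)"
  then obtain P where P: "partition_on {1..n} P" and Q: "Q \<in> part_children n P"
    by (auto simp: partitions_def)
  then show "Q \<in> partitions (Suc n)"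
    unfolding partitions_def labels_Suc(1)
    using partition_add_singleton[OF P labels_Suc(2)] partition_join_singletons[OF P labels_Suc(2)]
    by (auto simp: part_children_def)
qed

lemma part_children_disjoint: "disjoint_family_on (part_children n) (partitions n)"
  unfolding disjoint_family_on_def
proof (intro ballI impI)
  fix P P' assume P: "P \<in> partitions n" and P': "P' \<in> partitions n" and ne: "P \<noteq> P'"
  then have pP: "partition_on {1..n} P" and pP': "partition_on {1..n} P'" by (auto simp: partitions_def)
  note a = labels_Suc(2)
  have new_block: "{Suc n} \<notin> R" if "partition_on {1..n} R" for R
  proof
    assume "{Suc n} \<in> R"
    then have "Suc n \<in> \<Union>R" by blast
    then show False using partition_onD1[OF that] by (metis atLeastAtMost_iff Suc_n_not_le_n)
  qed
  have "Q \<notin> part_children n P'" if Q: "Q \<in> part_children n P" for Q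
  proof
    assume Q': "Q \<in> part_children n P'"
    from Q consider (single) "Q = insert {Suc n} P"
      | (join) Y where "Y \<noteq> {}" "Y \<subseteq> singletons P" "Q = join_singletons (Suc n) P Y"
      by (auto simp: part_children_def)
    moreover from Q' consider (single') "Q = insert {Suc n} P'"
      | (join') Y' where "Y' \<noteq> {}" "Y' \<subseteq> singletons P'" "Q = join_singletons (Suc n) P' Y'"
      by (auto simp: part_children_def)
    moreover have "insert {Suc n} P \<noteq> insert {Suc n} P'"
      using new_block[OF pP] new_block[OF pP'] ne by (metis insert_ident)
    ultimately show False
      using add_singleton_ne_join[OF pP' _ _ a, of _ P] add_singleton_ne_join[OF pP _ _ a, of _ P']
        join_singletons_inj[OF pP _ pP' _ a] ne by metis
  qed
  then show "part_children n P \<inter> part_children n P' = {}" by blast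
qed

lemma singletons_sub_labels: "P \<in> partitions n \<Longrightarrow> singletons P \<subseteq> {1..n}"
  using singletons_sub by (simp add: partitions_def)

lemma singletons_le: "P \<in> partitions n \<Longrightarrow> card (singletons P) \<le> n"
  using card_mono[OF finite_atLeastAtMost singletons_sub_labels] by simp

lemma finite_singletons: "P \<in> partitions n \<Longrightarrow> finite (singletons P)"
  using finite_subset[OF singletons_sub_labels] by simp


section \<open>Counting by a statistic\<close>

lemma sum_by_stat:
  fixes s :: "'a \<Rightarrow> nat" and h :: "nat \<Rightarrow> nat"
  assumes "finite A" "\<And>x. x \<in> A \<Longrightarrow> s x \<le> M"
  shows "(\<Sum>x\<in>A. h (s x)) = (\<Sum>a\<le>M. card {x\<in>A. s x = a} * h a)"
proof -
  have "(\<Sum>x\<in>A. h (s x)) = (\<Sum>a\<in>{..M}. \<Sum>x\<in>{x\<in>A. s x = a}. h (s x))"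
    by (rule sum.group[symmetric]) (use assms in auto)
  also have "\<dots> = (\<Sum>a\<le>M. card {x\<in>A. s x = a} * h a)"
    by (intro sum.cong refl) simp
  finally show ?thesis .
qed

lemma card_stat_children:
  fixes ch :: "'a \<Rightarrow> 'b set" and s :: "'a \<Rightarrow> nat" and t :: "'b \<Rightarrow> nat"
  assumes fin: "finite A" "\<And>x. x \<in> A \<Longrightarrow> finite (ch x)" and disj: "disjoint_family_on ch A"
    and bound: "\<And>x. x \<in> A \<Longrightarrow> s x \<le> M"
    and kernel: "\<And>x. x \<in> A \<Longrightarrow> card {z \<in> ch x. t z = b} = K (s x) b"
  shows "card {z \<in> (\<Union>x\<in>A. ch x). t z = b} = (\<Sum>a\<le>M. card {x\<in>A. s x = a} * K a b)"
proof -
  have "{z \<in> (\<Union>x\<in>A. ch x). t z = b} = (\<Union>x\<in>A. {z \<in> ch x. t z = b})" by blast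
  also have "card \<dots> = (\<Sum>x\<in>A. card {z \<in> ch x. t z = b})"
    using fin disj by (intro card_UN_disjoint) (auto simp: disjoint_family_on_def)
  also have "\<dots> = (\<Sum>x\<in>A. K (s x) b)" using kernel by simp
  also have "\<dots> = (\<Sum>a\<le>M. card {x\<in>A. s x = a} * K a b)"
    using sum_by_stat[OF fin(1) bound, where h="\<lambda>a. K a b"] .
  finally show ?thesis .
qed

lemma card_eq_by_refined_recurrence:
  fixes A :: "nat \<Rightarrow> 'a set" and B :: "nat \<Rightarrow> 'b set"
    and s :: "nat \<Rightarrow> 'a \<Rightarrow> nat" and t :: "nat \<Rightarrow> 'b \<Rightarrow> nat"
  assumes fin: "\<And>n. finite (A n)" "\<And>n. finite (B n)"
    and bound: "\<And>n x. x \<in> A n \<Longrightarrow> s n x \<le> n" "\<And>n y. y \<in> B n \<Longrightarrow> t n y \<le> n"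
    and base: "\<And>b. card {x\<in>A 0. s 0 x = b} = card {y\<in>B 0. t 0 y = b}"
    and recA: "\<And>n b. card {x\<in>A (Suc n). s (Suc n) x = b} = (\<Sum>a\<le>n. card {x\<in>A n. s n x = a} * K a b)"
    and recB: "\<And>n b. card {y\<in>B (Suc n). t (Suc n) y = b} = (\<Sum>a\<le>n. card {y\<in>B n. t n y = a} * K a b)"
  shows "card (A n) = card (B n)"
proof -
  have refined: "card {x\<in>A n. s n x = b} = card {y\<in>B n. t n y = b}" for b
    by (induction n arbitrary: b) (simp_all add: base recA recB)
  have "card (A n) = (\<Sum>a\<le>n. card {x\<in>A n. s n x = a} * 1)"
    using sum_by_stat[OF fin(1) bound(1), where h="\<lambda>_. 1"] by simp
  also have "\<dots> = (\<Sum>a\<le>n. card {y\<in>B n. t n y = a} * 1)" using refined by simp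
  also have "\<dots> = card (B n)"
    using sum_by_stat[OF fin(2) bound(2), where h="\<lambda>_. 1"] by simp
  finally show ?thesis .
qed

lemma card_stat_insert_image:
  assumes "finite Ys" "inj_on g Ys" "f \<notin> g ` Ys"
  shows "card {z \<in> insert f (g ` Ys). t z = b} = (if t f = b then 1 else 0) + card {Y\<in>Ys. t (g Y) = b}"
proof -
  have "{z \<in> g ` Ys. t z = b} = g ` {Y\<in>Ys. t (g Y) = b}" by blast
  then have "card {z \<in> g ` Ys. t z = b} = card {Y\<in>Ys. t (g Y) = b}"
    using assms(2) by (simp add: card_image inj_on_subset)
  moreover have "{z \<in> insert f (g ` Ys). t z = b} = (if t f = b then insert f else id) {z \<in> g ` Ys. t z = b}"
    by auto
  ultimately show ?thesis using assms(1,3) by simp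
qed

section \<open>The refined recurrences\<close>

text \<open>The common kernel: a parent with statistic \<open>a\<close> has one child with statistic
  \<open>a+1\<close> and \<open>a choose b\<close> children with statistic \<open>b\<close> for each \<open>b < a\<close>.\<close>
definition kernel :: "nat \<Rightarrow> nat \<Rightarrow> nat" where
  "kernel a b = (if Suc a = b then 1 else 0) + (if b < a then a choose b else 0)"

text \<open>Nonempty subsets \<open>Y\<close> of \<open>Z\<close> leaving \<open>b\<close> elements: these are the ways to join \<open>n+1\<close>
  to singletons so that \<open>b\<close> singletons remain.\<close>
lemma card_nonempty_subsets_by_complement:
  assumes Z: "finite Z"
  shows "card {Y. Y \<noteq> {} \<and> Y \<subseteq> Z \<and> card (Z - Y) = b} = (if b < card Z then card Z choose b else 0)"
proof -
  have dd: "W \<subseteq> Z \<Longrightarrow> Z - (Z - W) = W" for W by blast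
  have "bij_betw (\<lambda>Y. Z - Y) {Y. Y \<noteq> {} \<and> Y \<subseteq> Z \<and> card (Z - Y) = b} {W. W \<subseteq> Z \<and> card W = b \<and> W \<noteq> Z}"
    by (rule bij_betwI[where g="\<lambda>W. Z - W"]) (use dd in auto)
  then have "card {Y. Y \<noteq> {} \<and> Y \<subseteq> Z \<and> card (Z - Y) = b} = card {W. W \<subseteq> Z \<and> card W = b \<and> W \<noteq> Z}"
    by (rule bij_betw_same_card)
  also have "\<dots> = (if b < card Z then card Z choose b else 0)"
  proof (cases "b < card Z")
    case True
    then have "{W. W \<subseteq> Z \<and> card W = b \<and> W \<noteq> Z} = {W. W \<subseteq> Z \<and> card W = b}" by auto
    then show ?thesis using n_subsets[OF Z, of b] True by simp
  next
    case False
    have "{W. W \<subseteq> Z \<and> card W = b \<and> W \<noteq> Z} = {}"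
    proof (rule ccontr)
      assume "{W. W \<subseteq> Z \<and> card W = b \<and> W \<noteq> Z} \<noteq> {}"
      then obtain W where W: "W \<subseteq> Z" "card W = b" "W \<noteq> Z" by blast
      then have "card W < card Z" using Z by (meson psubsetI psubset_card_mono)
      then show False using W(2) False by simp
    qed
    then show ?thesis using False by (simp only: card.empty if_False)
  qed
  finally show ?thesis .
qed

text \<open>The free rows after adding a column with 1's in \<open>X\<close> are counted like the
  complement of a set of singletons: the involution \<open>swap_above_min\<close> keeps the minimum
  of \<open>X\<close> and complements \<open>X\<close> above it inside \<open>Z\<close>.\<close>
definition swap_above_min :: "nat set \<Rightarrow> nat set \<Rightarrow> nat set" where
  "swap_above_min Z X = insert (Min X) ({r\<in>Z. Min X < r} - X)"

lemma swap_above_min: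
  fixes Z :: "nat set"
  assumes Z: "finite Z" and X: "X \<noteq> {}" "X \<subseteq> Z"
  shows "swap_above_min Z X \<noteq> {}" "swap_above_min Z X \<subseteq> Z"
    "swap_above_min Z (swap_above_min Z X) = X"
    "Z - swap_above_min Z X = {r\<in>X. Min X < r} \<union> {r\<in>Z. r < Min X}"
proof -
  have fX: "finite X" using Z X(2) finite_subset by blast
  have mX: "Min X \<in> X" using Min_in[OF fX X(1)] .
  have mle: "\<And>x. x \<in> X \<Longrightarrow> Min X \<le> x" using Min_le[OF fX] by blast
  show "swap_above_min Z X \<noteq> {}" by (simp add: swap_above_min_def)
  show sub: "swap_above_min Z X \<subseteq> Z" using mX X(2) by (auto simp: swap_above_min_def)
  have "Min (swap_above_min Z X) = Min X"
    using sub Z by (intro Min_eqI) (auto simp: swap_above_min_def finite_subset)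
  then show "swap_above_min Z (swap_above_min Z X) = X"
    unfolding swap_above_min_def[of Z "swap_above_min Z X"]
    unfolding swap_above_min_def using mX mle X(2) by (auto simp: order.order_iff_strict)
  show "Z - swap_above_min Z X = {r\<in>X. Min X < r} \<union> {r\<in>Z. r < Min X}"
    using mX mle X(2) by (auto simp: swap_above_min_def)
qed

lemma card_new_free_rows:
  fixes Z :: "nat set"
  assumes Z: "finite Z"
  shows "card {X. X \<noteq> {} \<and> X \<subseteq> Z \<and> card ({r\<in>X. Min X < r} \<union> {r\<in>Z. r < Min X}) = b}
       = card {Y. Y \<noteq> {} \<and> Y \<subseteq> Z \<and> card (Z - Y) = b}"
proof (rule bij_betw_same_card, rule bij_betwI[where g="swap_above_min Z"])
  show "swap_above_min Z \<in> {X. X \<noteq> {} \<and> X \<subseteq> Z \<and> card ({r\<in>X. Min X < r} \<union> {r\<in>Z. r < Min X}) = b}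
      \<rightarrow> {Y. Y \<noteq> {} \<and> Y \<subseteq> Z \<and> card (Z - Y) = b}"
    using swap_above_min[OF Z] by auto
  show "swap_above_min Z \<in> {Y. Y \<noteq> {} \<and> Y \<subseteq> Z \<and> card (Z - Y) = b}
      \<rightarrow> {X. X \<noteq> {} \<and> X \<subseteq> Z \<and> card ({r\<in>X. Min X < r} \<union> {r\<in>Z. r < Min X}) = b}"
  proof
    fix Y assume "Y \<in> {Y. Y \<noteq> {} \<and> Y \<subseteq> Z \<and> card (Z - Y) = b}"
    then have Y: "Y \<noteq> {}" "Y \<subseteq> Z" "card (Z - Y) = b" by auto
    note sw = swap_above_min[OF Z Y(1,2)]
    show "swap_above_min Z Y
        \<in> {X. X \<noteq> {} \<and> X \<subseteq> Z \<and> card ({r\<in>X. Min X < r} \<union> {r\<in>Z. r < Min X}) = b}"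
      using swap_above_min(4)[OF Z sw(1,2)] sw Y(3) by auto
  qed
qed (use swap_above_min[OF Z] in auto)

lemma inv_free_children_count:
  assumes T: "T \<in> inv_free n"
  shows "card {z \<in> tab_children n T. card (free_rows (Suc n) z) = b} = kernel (card (free_rows n T)) b"
proof -
  let ?Z = "free_rows n T" and ?Xs = "{X. X \<noteq> {} \<and> X \<subseteq> free_rows n T}"
  have Z: "finite ?Z" using finite_free_rows[OF T] .
  have "card {z \<in> tab_children n T. card (free_rows (Suc n) z) = b}
      = (if card (free_rows (Suc n) (add_row n T)) = b then 1 else 0)
        + card {X\<in>?Xs. card (free_rows (Suc n) (add_col n T X)) = b}"
  proof (unfold tab_children_def, rule card_stat_insert_image)
    show "finite ?Xs" using Z by simp
    show "inj_on (add_col n T) ?Xs" using add_col_inj[OF T T] by (auto simp: inj_on_def)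
    show "add_row n T \<notin> add_col n T ` ?Xs" using add_row_ne_add_col[OF T, of T] by blast
  qed
  moreover have "card (free_rows (Suc n) (add_row n T)) = Suc (card ?Z)"
  proof -
    have "Suc n \<notin> ?Z" using free_rows_sub_labels[OF T] by auto
    then show ?thesis using free_rows_add_row[OF T] Z by simp
  qed
  moreover have "{X\<in>?Xs. card (free_rows (Suc n) (add_col n T X)) = b}
      = {X. X \<noteq> {} \<and> X \<subseteq> ?Z \<and> card ({r\<in>X. Min X < r} \<union> {r\<in>?Z. r < Min X}) = b}"
  proof (rule Collect_cong)
    show "X \<in> ?Xs \<and> card (free_rows (Suc n) (add_col n T X)) = b \<longleftrightarrow>
        X \<noteq> {} \<and> X \<subseteq> ?Z \<and> card ({r\<in>X. Min X < r} \<union> {r\<in>?Z. r < Min X}) = b" for X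
      by (cases "X \<noteq> {} \<and> X \<subseteq> ?Z") (auto simp: free_rows_add_col[OF T])
  qed
  ultimately show ?thesis
    using card_new_free_rows[OF Z] card_nonempty_subsets_by_complement[OF Z] by (simp add: kernel_def)
qed

lemma inv_free_recurrence:
  "card {T\<in>inv_free (Suc n). card (free_rows (Suc n) T) = b}
     = (\<Sum>a\<le>n. card {T\<in>inv_free n. card (free_rows n T) = a} * kernel a b)"
  unfolding inv_free_Suc
  using card_stat_children[where A="inv_free n" and ch="tab_children n" and M=n and K=kernel
      and s="\<lambda>T. card (free_rows n T)" and t="\<lambda>T. card (free_rows (Suc n) T)"]
    finite_inv_free tab_children_disjoint card_free_rows_le inv_free_children_count
  by (simp add: tab_children_def finite_free_rows)

lemma partition_children_count:
  assumes P: "P \<in> partitions n"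
  shows "card {z \<in> part_children n P. card (singletons z) = b} = kernel (card (singletons P)) b"
proof -
  let ?Z = "singletons P" and ?Ys = "{Y. Y \<noteq> {} \<and> Y \<subseteq> singletons P}"
  have pP: "partition_on {1..n} P" using P by (simp add: partitions_def)
  note a = labels_Suc(2)
  have Z: "finite ?Z" using finite_singletons[OF P] .
  have "card {z \<in> part_children n P. card (singletons z) = b}
      = (if card (singletons (insert {Suc n} P)) = b then 1 else 0)
        + card {Y\<in>?Ys. card (singletons (join_singletons (Suc n) P Y)) = b}"
  proof (unfold part_children_def, rule card_stat_insert_image)
    show "finite ?Ys" using Z by simp
    show "inj_on (join_singletons (Suc n) P) ?Ys"
      using join_singletons_inj[OF pP _ pP _ a] by (auto simp: inj_on_def)
    show "insert {Suc n} P \<notin> join_singletons (Suc n) P ` ?Ys"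
      using add_singleton_ne_join[OF pP _ _ a] by blast
  qed
  moreover have "card (singletons (insert {Suc n} P)) = Suc (card ?Z)"
    using singletons_add_singleton[OF pP a] Z by simp
  moreover have "{Y\<in>?Ys. card (singletons (join_singletons (Suc n) P Y)) = b}
      = {Y. Y \<noteq> {} \<and> Y \<subseteq> ?Z \<and> card (?Z - Y) = b}"
  proof (rule Collect_cong)
    show "Y \<in> ?Ys \<and> card (singletons (join_singletons (Suc n) P Y)) = b \<longleftrightarrow>
        Y \<noteq> {} \<and> Y \<subseteq> ?Z \<and> card (?Z - Y) = b" for Y
      by (cases "Y \<noteq> {} \<and> Y \<subseteq> ?Z") (auto simp: singletons_join[OF pP a])
  qed
  ultimately show ?thesis
    using card_nonempty_subsets_by_complement[OF Z] by (simp add: kernel_def)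
qed

lemma partitions_recurrence:
  "card {P\<in>partitions (Suc n). card (singletons P) = b}
     = (\<Sum>a\<le>n. card {P\<in>partitions n. card (singletons P) = a} * kernel a b)"
  unfolding partitions_Suc
  using card_stat_children[where A="partitions n" and ch="part_children n" and M=n and K=kernel
      and s="\<lambda>P. card (singletons P)" and t="\<lambda>P. card (singletons P)"]
    finite_partitions part_children_disjoint singletons_le partition_children_count
  by (simp add: part_children_def finite_singletons)

lemma inv_free_0: "inv_free 0 = {({}, {})}"
  by (auto simp: inv_free_def perm_tableau_def cols_def cells_def inversions_def tab_inv_def)

lemma partitions_0: "partitions 0 = {{}}"
  by (auto simp: partitions_def partition_on_empty)

theorem theorem3p2:
  fixes n :: nat
  assumes "n \<ge> 1"
  shows "card {T. perm_tableau n T \<and> tab_inv n T = 0} = card {P. partition_on {1..n} P}"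
proof -
  have "free_rows 0 ({}, {}) = {}" "singletons ({} :: nat set set) = {}"
    by (simp_all add: free_rows_def singletons_def)
  then have "{T\<in>inv_free 0. card (free_rows 0 T) = b} = (if b = 0 then {({}, {})} else {})"
    "{P\<in>partitions 0. card (singletons P) = b} = (if b = 0 then {{}} else {})" for b
    by (auto simp: inv_free_0 partitions_0)
  then have base: "card {T\<in>inv_free 0. card (free_rows 0 T) = b}
      = card {P\<in>partitions 0. card (singletons P) = b}" for b
    by simp
  have "card (inv_free n) = card (partitions n)"
    by (rule card_eq_by_refined_recurrence[where s="\<lambda>n T. card (free_rows n T)"
          and t="\<lambda>n P. card (singletons P)", OF finite_inv_free finite_partitions
          card_free_rows_le singletons_le base inv_free_recurrence partitions_recurrence])
  then show ?thesis by (simp add: inv_free_def partitions_def)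
qed

end
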